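(* Let $\mu$ be a probability distribution on $\mathbb{R}_+=[0,\infty)$, let $c>0$, $\Delta:=(0,c]$, and $p(x):=c^{-1}\mu((x-c,x])$. Then $\mu\in\mathcal{S}_\Delta$ if and only if $p\in\mathcal{S}_d$. Moreover, $\mu\in\mathcal{S}_{loc}$ if and only if there exists a density function $q$ on $\mathbb{R}_+$ (i.e. $q\ge 0$, $q=0$ on $(-\infty,0)$, $\int q=1$) such that $q\in\mathcal{S}_d$ and $c^{-1}\mu((x-c,x])\sim q(x)$ for every $c>0$.
   Context: For positive functions $f,g$ defined on some $[a,\infty)$, $f(x)\sim g(x)$ means $\lim_{x\to\infty}f(x)/g(x)=1$. A density function is a measurable $g:\mathbb{R}\to[0,\infty)$ with $\int_{-\infty}^\infty g(x)\,dx=1$. For integrable $f,g$, $f\otimes g(x):=\int_{-\infty}^{\infty} f(x-u)g(u)\,du$ and $f^{n\otimes}$ is the $n$-fold convolution power; for measures, $\eta*\rho$ is convolution and $\rho^{n*}$ the $n$-th convolution power. The class $\mathbf{L}$ consists of nonnegative measurable $g$ on $\mathbb{R}$ with $g(x)>0$ for all sufficiently large $x$ and $g(x+a)\sim g(x)$ for every $a\in\mathbb{R}$. $\mathcal{L}_d$ is the set of density functions in $\mathbf{L}$; $\mathcal{S}_d$ is the set of $g\in\mathcal{L}_d$ with $g\otimes g(x)\sim 2g(x)$. For $\Delta=(0,c]$, $c>0$: a distribution $\rho$ on $\mathbb{R}$ belongs to $\mathcal{L}_\Delta$ if $x\mapsto\rho((x,x+c])$ belongs to $\mathbf{L}$,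 and to $\mathcal{S}_\Delta$ if $\rho\in\mathcal{L}_\Delta$ and $\rho*\rho((x,x+c])\sim 2\rho((x,x+c])$. $\mathcal{L}_{loc}$ (resp. $\mathcal{S}_{loc}$) is the class of distributions belonging to $\mathcal{L}_\Delta$ (resp. $\mathcal{S}_\Delta$) for every $\Delta=(0,c]$, $c>0$. *)

theory Defs
  imports "HOL-Probability.Probability"
begin

definition asymp_equiv_top :: "(real \<Rightarrow> real) \<Rightarrow> (real \<Rightarrow> real) \<Rightarrow> bool" where
  "asymp_equiv_top f g \<longleftrightarrow> ((\<lambda>x. f x / g x) \<longlongrightarrow> 1) at_top"

definition density_fun :: "(real \<Rightarrow> real) \<Rightarrow> bool" where
  "density_fun g \<longleftrightarrow> g \<in> borel_measurable borel \<and> (\<forall>x. 0 \<le> g x)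
     \<and> (\<integral>\<^sup>+ x. ennreal (g x) \<partial>lborel) = 1"

definition class_L :: "(real \<Rightarrow> real) \<Rightarrow> bool" where
  "class_L g \<longleftrightarrow> g \<in> borel_measurable borel \<and> (\<forall>x. 0 \<le> g x)
     \<and> (\<forall>\<^sub>F x in at_top. g x > 0)
     \<and> (\<forall>a. asymp_equiv_top (\<lambda>x. g (x + a)) g)"

definition fconv :: "(real \<Rightarrow> real) \<Rightarrow> (real \<Rightarrow> real) \<Rightarrow> real \<Rightarrow> real" where
  "fconv f g x = (\<integral>u. f (x - u) * g u \<partial>lborel)"

definition L_d :: "(real \<Rightarrow> real) \<Rightarrow> bool" where
  "L_d g \<longleftrightarrow> density_fun g \<and> class_L g"

definition S_d :: "(real \<Rightarrow> real) \<Rightarrow> bool" where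
  "S_d g \<longleftrightarrow> L_d g \<and> asymp_equiv_top (fconv g g) (\<lambda>x. 2 * g x)"

definition real_distribution' :: "real measure \<Rightarrow> bool" where
  "real_distribution' M \<longleftrightarrow> prob_space M \<and> sets M = sets borel"

definition L_Delta :: "real \<Rightarrow> real measure \<Rightarrow> bool" where
  "L_Delta c \<rho> \<longleftrightarrow> class_L (\<lambda>x. measure \<rho> {x<..x+c})"

definition S_Delta :: "real \<Rightarrow> real measure \<Rightarrow> bool" where
  "S_Delta c \<rho> \<longleftrightarrow> L_Delta c \<rho> \<and>
     asymp_equiv_top (\<lambda>x. measure (\<rho> \<star> \<rho>) {x<..x+c}) (\<lambda>x. 2 * measure \<rho> {x<..x+c})"

definition S_loc :: "real measure \<Rightarrow> bool" where
  "S_loc \<rho> \<longleftrightarrow> (\<forall>c>0. S_Delta c \<rho>)"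

end

theory Submission
  imports Defs
begin

text \<open>
  Write \<open>g(x) = \<mu>((x - c, x])\<close>, so that \<open>p = g / c\<close>, let \<open>\<chi>\<close> be the indicator of \<open>[0,c)\<close>
  and \<open>T = \<chi> \<otimes> \<chi>\<close> the triangular kernel. Both conditions compare a convolution with \<open>g\<close>:
  \<open>\<mu> \<in> S\<^sub>\<Delta>\<close> says \<open>H / g \<rightarrow> 2\<close> for \<open>H(x) = (\<mu> * \<mu>)((x - c, x]) = \<integral> g(x - y) d\<mu>(y)\<close>,
  and \<open>p \<in> S\<^sub>d\<close> says \<open>K / g \<rightarrow> 2c\<close> for \<open>K = c\<^sup>2 (p \<otimes> p) = \<integral>\<integral> T(x - y - z) d\<mu>(y) d\<mu>(z)\<close>.
  Since \<open>K(x) = \<integral>\<^sub>0\<^sup>c H(x - u) du\<close> and, for \<open>g\<close> in \<open>L\<close>, \<open>g(x - y) / g(x)\<close> is bounded uniformly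
  for \<open>y\<close> in compacts, \<open>H / g \<rightarrow> 2\<close> implies \<open>K / g \<rightarrow> 2c\<close>. Conversely, splitting the double
  integrals according to whether one of the two summands lies in \<open>[0,a]\<close> gives
  \<open>H = 2 H\<^sub>a + M\<^sub>a\<close> and \<open>K = 2 K\<^sub>a + N\<^sub>a\<close> with \<open>H\<^sub>a \<sim> \<mu>([0,a]) g\<close> and \<open>K\<^sub>a \<sim> c \<mu>([0,a]) g\<close>.
  Hence \<open>K / g \<rightarrow> 2c\<close> makes \<open>N\<^sub>a / g\<close> eventually small for large \<open>a\<close>, and
  \<open>c \<chi> \<le> T + T(\<cdot> + c)\<close> bounds \<open>c M\<^sub>a(x)\<close> by \<open>N\<^sub>a(x) + N\<^sub>a(x + c)\<close>.

  For the second claim: if all windows \<open>g\<^sub>c\<close> lie in \<open>L\<close>, then \<open>g\<^sub>c / g\<^sub>1 \<rightarrow> c\<close>, first for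
  rational \<open>c\<close> by additivity of \<open>\<mu>\<close> and then by monotonicity in \<open>c\<close>, so \<open>q = g\<^sub>1\<close> works.
  Conversely, if \<open>g\<^sub>c / c \<sim> q\<close> with \<open>q \<in> S\<^sub>d\<close>, then \<open>N\<^sub>a(x)\<close> is at most \<open>4c\<^sup>2\<close> times the part of
  \<open>(q \<otimes> q)(x)\<close> where both arguments exceed \<open>a\<close>, which is \<open>o(q(x))\<close> as \<open>a \<rightarrow> \<infinity>\<close>.
\<close>

section \<open>Asymptotic equivalence and the class L\<close>

lemma filterlim_add_const_at_top_real: "filterlim (\<lambda>x::real. x + b) at_top at_top"
  using filterlim_tendsto_add_at_top[OF tendsto_const[of b] filterlim_ident] by (simp add: add.commute)

lemma tendsto_shift_at_top: "(f \<longlongrightarrow> l) at_top \<Longrightarrow> ((\<lambda>x::real. f (x + b)) \<longlongrightarrow> l) at_top"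
  using filterlim_compose[OF _ filterlim_add_const_at_top_real] by blast

lemma eventually_shift_at_top: "eventually P (at_top::real filter) \<Longrightarrow> eventually (\<lambda>x. P (x + b)) at_top"
  using filterlim_add_const_at_top_real[of b] unfolding filterlim_def le_filter_def eventually_filtermap by auto

lemma tendsto_divide_const_iff:
  fixes f :: "'a \<Rightarrow> real"
  assumes "r \<noteq> 0"
  shows "((\<lambda>x. f x / r) \<longlongrightarrow> l) F \<longleftrightarrow> (f \<longlongrightarrow> l * r) F"
proof
  assume "((\<lambda>x. f x / r) \<longlongrightarrow> l) F"
  from tendsto_mult_right[OF this, of r] show "(f \<longlongrightarrow> l * r) F" using assms by simp
next
  assume "(f \<longlongrightarrow> l * r) F"
  from tendsto_divide[OF this tendsto_const[of r]] show "((\<lambda>x. f x / r) \<longlongrightarrow> l) F"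
    using assms by simp
qed

lemma asymp_equiv_top_shift_iff:
  "asymp_equiv_top (\<lambda>x. f (x + b)) (\<lambda>x. g (x + b)) \<longleftrightarrow> asymp_equiv_top f g"
  unfolding asymp_equiv_top_def
  using tendsto_shift_at_top[of "\<lambda>x. f (x + b) / g (x + b)" 1 "-b"]
    tendsto_shift_at_top[of "\<lambda>x. f x / g x" 1 b] by auto

lemma asymp_equiv_top_iff_tendsto_ratio:
  fixes r :: real
  assumes "r \<noteq> 0"
  shows "asymp_equiv_top f (\<lambda>x. r * g x) \<longleftrightarrow> ((\<lambda>x. f x / g x) \<longlongrightarrow> r) at_top"
proof -
  have "(\<lambda>x. f x / (r * g x)) = (\<lambda>x. f x / g x / r)"
    by (simp add: fun_eq_iff field_simps)
  then show ?thesis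
    using tendsto_divide_const_iff[OF assms, of "\<lambda>x. f x / g x" 1 at_top]
    by (simp add: asymp_equiv_top_def)
qed

lemma class_LD:
  assumes "class_L f"
  shows "f \<in> borel_measurable borel" "0 \<le> f x" "\<forall>\<^sub>F x in at_top. 0 < f x"
    and "((\<lambda>x. f (x + b) / f x) \<longlongrightarrow> 1) at_top"
  using assms unfolding class_L_def asymp_equiv_top_def by auto

lemma class_L_shift:
  assumes "class_L f"
  shows "class_L (\<lambda>x. f (x + b))"
proof -
  note f = class_LD[OF assms]
  have "(\<lambda>x. f (x + b)) \<in> borel_measurable borel"
    using measurable_compose[OF _ f(1), of "\<lambda>x. x + b" borel] by simp
  moreover have "asymp_equiv_top (\<lambda>x. f (x + a + b)) (\<lambda>x. f (x + b))" for a
    using tendsto_shift_at_top[OF f(4)[of a], of b]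
    unfolding asymp_equiv_top_def by (simp add: algebra_simps)
  ultimately show ?thesis
    unfolding class_L_def using f(2,3) eventually_shift_at_top[OF f(3)] by auto
qed

lemma class_L_shift_iff: "class_L (\<lambda>x. f (x + b)) \<longleftrightarrow> class_L f"
  using class_L_shift[of "\<lambda>x. f (x + b)" "-b"] class_L_shift[of f b] by auto

lemma class_L_cmult:
  assumes "class_L f" "0 < r"
  shows "class_L (\<lambda>x. r * f x)"
proof -
  note f = class_LD[OF assms(1)]
  have "(\<lambda>x. r * f (x + a) / (r * f x)) = (\<lambda>x. f (x + a) / f x)" for a
    using assms(2) by (intro ext) simp
  moreover have "\<forall>\<^sub>F x in at_top. 0 < r * f x"
    using f(3) by eventually_elim (use assms(2) in simp)
  ultimately show ?thesis
    using f assms(2) unfolding class_L_def asymp_equiv_top_def by auto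
qed

lemma class_L_divide_iff:
  assumes "0 < r"
  shows "class_L (\<lambda>x. f x / r) \<longleftrightarrow> class_L f"
  using class_L_cmult[of "\<lambda>x. f x / r" r] class_L_cmult[of f "1 / r"] assms by auto

lemma class_L_asymp_equiv:
  assumes q: "class_L q" and [measurable]: "f \<in> borel_measurable borel" and "\<And>x. 0 \<le> f x"
    and fq: "asymp_equiv_top f q"
  shows "class_L f"
proof -
  note q = class_LD[OF q]
  have ratio: "((\<lambda>x. f x / q x) \<longlongrightarrow> 1) at_top"
    using fq unfolding asymp_equiv_top_def .
  have "\<forall>\<^sub>F x in at_top. 0 < f x / q x"
    using ratio by (rule order_tendstoD) simp
  then have f_pos: "\<forall>\<^sub>F x in at_top. 0 < f x"
    using q(3) by eventually_elim (auto simp: zero_less_divide_iff)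
  have "asymp_equiv_top (\<lambda>x. f (x + a)) f" for a
  proof -
    have "((\<lambda>x. (f (x + a) / q (x + a)) * (q (x + a) / q x) / (f x / q x)) \<longlongrightarrow> 1 * 1 / 1) at_top"
      by (intro tendsto_divide tendsto_mult ratio q(4) tendsto_shift_at_top[OF ratio]) simp
    moreover have "\<forall>\<^sub>F x in at_top.
        (f (x + a) / q (x + a)) * (q (x + a) / q x) / (f x / q x) = f (x + a) / f x"
      using q(3) eventually_shift_at_top[OF q(3), of a] f_pos
      by eventually_elim (simp add: field_simps)
    ultimately show ?thesis
      unfolding asymp_equiv_top_def by (auto intro: Lim_transform_eventually)
  qed
  then show ?thesis unfolding class_L_def using assms(3) f_pos by auto
qed

lemma positive_fraction_between:
  fixes l u :: real
  assumes "0 \<le> l" "l < u"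
  obtains m n :: nat where "0 < m" "0 < n" "l < real m / real n" "real m / real n < u"
proof -
  obtain r where r: "r \<in> \<rat>" "l < r" "r < u" using Rats_dense_in_real[OF assms(2)] by blast
  obtain m n :: nat where n: "n \<noteq> 0" and mn: "\<bar>r\<bar> = real m / real n"
    using Rats_abs_nat_div_natE[OF r(1)] by metis
  have "0 < r" using r assms by linarith
  then have "0 < m" using mn by (cases "m = 0") auto
  then show ?thesis using that n mn r \<open>0 < r\<close> by auto
qed

section \<open>Bounded kernels\<close>

lemma pred_Ioc[measurable (raw)]:
  fixes f g h :: "'a \<Rightarrow> real"
  assumes [measurable]: "f \<in> borel_measurable M" "g \<in> borel_measurable M" "h \<in> borel_measurable M"
  shows "Measurable.pred M (\<lambda>x. f x \<in> {g x<..h x})"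
  unfolding greaterThanAtMost_iff by measurable

lemma pred_Ico[measurable (raw)]:
  fixes f g h :: "'a \<Rightarrow> real"
  assumes [measurable]: "f \<in> borel_measurable M" "g \<in> borel_measurable M" "h \<in> borel_measurable M"
  shows "Measurable.pred M (\<lambda>x. f x \<in> {g x..<h x})"
  unfolding atLeastLessThan_iff by measurable

lemma emeasure_lborel_between:
  fixes a b :: real
  assumes "S \<in> sets borel" "{a<..<b} \<subseteq> S" "S \<subseteq> {a..b}"
  shows "emeasure lborel S = ennreal (max 0 (b - a))"
proof (cases "a \<le> b")
  case True
  have "emeasure lborel {a<..<b} \<le> emeasure lborel S"
    using assms by (intro emeasure_mono) auto
  moreover have "emeasure lborel S \<le> emeasure lborel {a..b}"
    using assms by (intro emeasure_mono) auto
  ultimately show ?thesis using True by (auto intro: antisym)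
next
  case False
  then have "S = {}" using assms by auto
  then show ?thesis using False by simp
qed

lemma emeasure_lborel_Ico_less_top: "emeasure lborel {a..<b::real} < \<top>"
  by (cases "a \<le> b") auto

lemma ennreal_integral_bounded:
  fixes M :: "'a measure"
  assumes "finite_measure M" "f \<in> borel_measurable M" "\<And>y. 0 \<le> f y" "\<And>y. f y \<le> B"
  shows "ennreal (\<integral>y. f y \<partial>M) = (\<integral>\<^sup>+y. ennreal (f y) \<partial>M)"
proof -
  interpret finite_measure M by (rule assms(1))
  have "integrable M f"
    by (rule integrable_const_bound[where B=B]) (use assms in auto)
  then show ?thesis using assms(3) by (simp add: nn_integral_eq_integral)
qed

lemma ennreal_indicator_times: "ennreal (indicator A x * r) = indicator A x * ennreal r"
  by (simp split: split_indicator)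

lemma ennreal_times_2: "2 * ennreal r = ennreal (2 * r)"
  by (subst ennreal_mult') auto

definition bounded_kernel :: "real \<Rightarrow> (real \<Rightarrow> real) \<Rightarrow> bool" where
  "bounded_kernel B \<psi> \<longleftrightarrow> \<psi> \<in> borel_measurable borel \<and> (\<forall>t. 0 \<le> \<psi> t \<and> \<psi> t \<le> B)"

lemma bounded_kernelD:
  assumes "bounded_kernel B \<psi>"
  shows "\<psi> \<in> borel_measurable borel" "0 \<le> \<psi> t" "\<psi> t \<le> B" "0 \<le> B"
  using assms unfolding bounded_kernel_def by (auto intro: order_trans)

lemma bounded_kernel_indicator: "bounded_kernel 1 (indicator {0..<c})"
  by (simp add: bounded_kernel_def indicator_def)

text \<open>\<open>tri c t\<close> is the Lebesgue measure of \<open>[0,c) \<inter> (t - c, t]\<close>, i.e. the self-convolution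
  of the indicator of \<open>[0,c)\<close>.\<close>

definition tri :: "real \<Rightarrow> real \<Rightarrow> real" where
  "tri c t = max 0 (min c t - max 0 (t - c))"

lemma tri_measurable[measurable]: "tri c \<in> borel_measurable borel"
  unfolding tri_def by measurable

lemma tri_nonneg: "0 \<le> tri c t"
  by (simp add: tri_def)

lemma tri_le: "0 \<le> c \<Longrightarrow> tri c t \<le> c"
  by (simp add: tri_def)

lemma tri_eq_0: "2 * c \<le> t \<Longrightarrow> tri c t = 0"
  by (simp add: tri_def)

lemma tri_add_shift: "0 \<le> t \<Longrightarrow> t < c \<Longrightarrow> tri c t + tri c (t + c) = c"
  by (simp add: tri_def)

lemma bounded_kernel_tri: "0 \<le> c \<Longrightarrow> bounded_kernel c (tri c)"
  by (simp add: bounded_kernel_def tri_nonneg tri_le)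

lemma nn_integral_tri:
  assumes "0 < c"
  shows "ennreal (tri c (s - y)) = (\<integral>\<^sup>+u. indicator {y..<y + c} u * indicator {s - c<..s} u \<partial>lborel)"
proof -
  let ?S = "{u. y \<le> u \<and> u < y + c \<and> s - c < u \<and> u \<le> s}"
  have "(\<lambda>u. indicator {y..<y + c} u * indicator {s - c<..s} u :: ennreal) = indicator ?S"
    by (auto simp: indicator_def fun_eq_iff)
  moreover have "?S \<in> sets borel" by measurable
  moreover have "emeasure lborel ?S = ennreal (max 0 (min (y + c) s - max y (s - c)))"
    by (rule emeasure_lborel_between) auto
  moreover have "min (y + c) s - max y (s - c) = min c (s - y) - max 0 (s - y - c)"
    by (simp add: min_def max_def)
  ultimately show ?thesis by (simp add: tri_def)
qed

definition local_integral :: "real \<Rightarrow> (real \<Rightarrow> real) \<Rightarrow> real \<Rightarrow> real" where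
  "local_integral c \<phi> t = (\<integral>u. indicator {0..<c} u * \<phi> (t - u) \<partial>lborel)"

lemma integrable_local_integral:
  assumes "bounded_kernel B \<phi>"
  shows "integrable lborel (\<lambda>u. indicator {0..<c} u * \<phi> (t - u))"
proof (rule Bochner_Integration.integrable_bound)
  note \<phi> = bounded_kernelD[OF assms]
  have [measurable]: "\<phi> \<in> borel_measurable borel" by (rule \<phi>(1))
  show "integrable lborel (\<lambda>u. B * indicator {0..<c} u :: real)"
    by (intro integrable_mult_right integrable_real_indicator) (simp_all add: emeasure_lborel_Ico_less_top)
  show "(\<lambda>u. indicator {0..<c} u * \<phi> (t - u)) \<in> borel_measurable lborel" by measurable
  show "AE u in lborel. norm (indicator {0..<c} u * \<phi> (t - u)) \<le> norm (B * indicator {0..<c} u :: real)"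
    using \<phi>(2-4) by (auto simp: indicator_def)
qed

lemma ennreal_local_integral:
  assumes "bounded_kernel B \<phi>"
  shows "ennreal (local_integral c \<phi> t) = (\<integral>\<^sup>+u. indicator {0..<c} u * ennreal (\<phi> (t - u)) \<partial>lborel)"
proof -
  have "ennreal (local_integral c \<phi> t) = (\<integral>\<^sup>+u. ennreal (indicator {0..<c} u * \<phi> (t - u)) \<partial>lborel)"
    unfolding local_integral_def using bounded_kernelD(2)[OF assms]
    by (intro nn_integral_eq_integral[symmetric] integrable_local_integral[OF assms]) auto
  also have "\<dots> = (\<integral>\<^sup>+u. indicator {0..<c} u * ennreal (\<phi> (t - u)) \<partial>lborel)"
    by (intro nn_integral_cong) (simp split: split_indicator)
  finally show ?thesis .
qed

lemma bounded_kernel_local_integral: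
  assumes "bounded_kernel B \<phi>" "0 \<le> c"
  shows "bounded_kernel (c * B) (local_integral c \<phi>)"
proof -
  note \<phi> = bounded_kernelD[OF assms(1)]
  have [measurable]: "\<phi> \<in> borel_measurable borel" by (rule \<phi>(1))
  have "local_integral c \<phi> t \<le> (\<integral>u. B * indicator {0..<c} u \<partial>lborel)" for t
    unfolding local_integral_def
    by (intro integral_mono integrable_local_integral[OF assms(1)] integrable_mult_right
        integrable_real_indicator) (use \<phi>(3) in \<open>auto simp: indicator_def emeasure_lborel_Ico_less_top\<close>)
  then show ?thesis
    unfolding bounded_kernel_def local_integral_def
    using assms(2) \<phi>(2) by (auto intro!: integral_nonneg simp: mult.commute)
qed

lemma tri_eq_local_integral:
  assumes "0 < c"
  shows "tri c = local_integral c (indicator {0..<c})"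
proof
  fix t
  have "ennreal (tri c t) = ennreal (local_integral c (indicator {0..<c}) t)"
    using nn_integral_tri[OF assms, of t 0]
    by (simp add: ennreal_local_integral[OF bounded_kernel_indicator])
       (intro nn_integral_cong, auto split: split_indicator)
  then show "tri c t = local_integral c (indicator {0..<c}) t"
    using bounded_kernelD(2)[OF bounded_kernel_local_integral[OF bounded_kernel_indicator]] assms
    by (simp add: tri_nonneg)
qed

section \<open>Subexponential densities\<close>

lemma ennreal_le_diff_of_sum:
  fixes M I :: ennreal and F L U :: real
  assumes sum: "ennreal F = M + 2 * I" and L: "ennreal L \<le> I" and "F \<le> U"
  shows "M \<le> ennreal (U - 2 * L)"
proof -
  have "M \<le> ennreal F" "I \<le> ennreal F"
    using sum by (auto intro: order_trans[OF _ add_increasing2] simp: mult_2)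
  then obtain m i where m: "M = ennreal m" "0 \<le> m" and i: "I = ennreal i" "0 \<le> i"
    by (metis ennreal_cases ennreal_less_top top.not_eq_extremum top_unique)
  show ?thesis
  proof (cases "0 \<le> L")
    case True
    then have "L \<le> i" using L i by simp
    moreover have "F = m + 2 * i" if "0 \<le> F"
      using sum m i that by (simp add: ennreal_times_2 ennreal_plus[symmetric] del: ennreal_plus)
    ultimately show ?thesis
    proof (cases "0 \<le> F")
      case False
      then have "M = 0" using sum by (simp add: ennreal_neg)
      then show ?thesis by simp
    qed (use m \<open>F \<le> U\<close> in \<open>auto intro: ennreal_leI\<close>)
  next
    case False
    have "M \<le> ennreal F" by fact
    also have "\<dots> \<le> ennreal (U - 2 * L)" using False \<open>F \<le> U\<close> by (intro ennreal_leI) simp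
    finally show ?thesis .
  qed
qed

locale subexponential_density =
  fixes q :: "real \<Rightarrow> real"
  assumes density: "density_fun q" and subexponential: "S_d q"
begin

lemma measurable[measurable]: "q \<in> borel_measurable borel"
  and nonneg: "0 \<le> q x"
  and nn_integral_eq_1: "(\<integral>\<^sup>+x. ennreal (q x) \<partial>lborel) = 1"
  using density unfolding density_fun_def by auto

lemma integrable: "integrable lborel q"
  by (rule integrableI_nonneg) (auto simp: nonneg nn_integral_eq_1)

lemma integral_eq_1: "(\<integral>x. q x \<partial>lborel) = 1"
  using integral_eq_nn_integral[of q lborel] nonneg nn_integral_eq_1 by simp

lemma class_L: "class_L q"
  using subexponential unfolding S_d_def L_d_def by auto

lemma eventually_pos: "\<forall>\<^sub>F x in at_top. 0 < q x"
  and shift_ratio: "((\<lambda>x. q (x + b) / q x) \<longlongrightarrow> 1) at_top"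
  using class_LD[OF class_L] by auto

lemma conv_ratio: "((\<lambda>x. fconv q q x / (2 * q x)) \<longlongrightarrow> 1) at_top"
  using subexponential unfolding S_d_def asymp_equiv_top_def by auto

definition lower_mass :: "real \<Rightarrow> real" where
  "lower_mass a = (\<integral>u. indicator {..a} u * q u \<partial>lborel)"

definition conv_head :: "real \<Rightarrow> real \<Rightarrow> ennreal" where
  "conv_head a x = (\<integral>\<^sup>+u. indicator {..a} u * ennreal (q u * q (x - u)) \<partial>lborel)"

definition conv_middle :: "real \<Rightarrow> real \<Rightarrow> ennreal" where
  "conv_middle a x = (\<integral>\<^sup>+u. indicator {a<..} u * indicator {a<..} (x - u) * ennreal (q u * q (x - u)) \<partial>lborel)"

lemma tendsto_lower_mass: "(lower_mass \<longlongrightarrow> 1) at_top"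
proof -
  have "(lower_mass \<longlongrightarrow> (\<integral>u. q u \<partial>lborel)) at_top"
    unfolding lower_mass_def
  proof (rule integral_dominated_convergence_at_top[where w=q])
    show "AE u in lborel. ((\<lambda>a. indicator {..a} u * q u) \<longlongrightarrow> q u) at_top"
    proof (intro AE_I2)
      fix u
      have "\<forall>\<^sub>F a in at_top. q u = indicator {..a} u * q u"
        using eventually_ge_at_top[of u] by eventually_elim (simp add: indicator_def)
      from Lim_transform_eventually[OF tendsto_const this]
      show "((\<lambda>a. indicator {..a} u * q u) \<longlongrightarrow> q u) at_top" .
    qed
    show "\<forall>\<^sub>F a in at_top. AE u in lborel. norm (indicator {..a} u * q u) \<le> q u"
      by (intro always_eventually allI AE_I2) (auto simp: indicator_def nonneg)
  qed (auto simp: integrable)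
  then show ?thesis by (simp add: integral_eq_1)
qed

text \<open>The cut-off at \<open>min 1\<close> supplies the dominating function \<open>q\<close>: unlike for windows,
  no uniform control of \<open>q (x - u) / q x\<close> over \<open>u \<le> a\<close> is available.\<close>

lemma tendsto_truncated_head:
  "((\<lambda>x. \<integral>u. indicator {..a} u * q u * min 1 (q (x - u) / q x) \<partial>lborel) \<longlongrightarrow> lower_mass a) at_top"
  unfolding lower_mass_def
proof (rule integral_dominated_convergence_at_top[where w=q])
  show "AE u in lborel. ((\<lambda>x. indicator {..a} u * q u * min 1 (q (x - u) / q x)) \<longlongrightarrow> indicator {..a} u * q u) at_top"
  proof (intro AE_I2)
    fix u
    have "((\<lambda>x. min 1 (q (x + - u) / q x)) \<longlongrightarrow> min 1 1) at_top"
      by (intro tendsto_min tendsto_const shift_ratio)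
    then show "((\<lambda>x. indicator {..a} u * q u * min 1 (q (x - u) / q x)) \<longlongrightarrow> indicator {..a} u * q u) at_top"
      using tendsto_mult_left[of _ 1 at_top "indicator {..a} u * q u"] by simp
  qed
  show "\<forall>\<^sub>F x in at_top. AE u in lborel. norm (indicator {..a} u * q u * min 1 (q (x - u) / q x)) \<le> q u"
  proof (intro always_eventually allI AE_I2)
    fix x u
    have "0 \<le> min 1 (q (x - u) / q x)" "min 1 (q (x - u) / q x) \<le> 1"
      by (auto simp: nonneg)
    then show "norm (indicator {..a} u * q u * min 1 (q (x - u) / q x)) \<le> q u"
      using nonneg[of u] by (auto simp: indicator_def abs_mult intro: mult_left_le)
  qed
qed (auto simp: integrable)

lemma truncated_head_le_conv_head:
  assumes "0 < q x"
  shows "ennreal ((\<integral>u. indicator {..a} u * q u * min 1 (q (x - u) / q x) \<partial>lborel) * q x) \<le> conv_head a x"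
proof -
  have int: "integrable lborel (\<lambda>u. indicator {..a} u * q u * min (q x) (q (x - u)))"
  proof (rule Bochner_Integration.integrable_bound[OF integrable_mult_right[OF integrable, of "q x"]])
    show "AE u in lborel. norm (indicator {..a} u * q u * min (q x) (q (x - u))) \<le> norm (q x * q u)"
      using nonneg by (intro AE_I2) (auto simp: indicator_def abs_mult mult.commute intro: mult_left_mono)
  qed measurable
  have "(\<integral>u. indicator {..a} u * q u * min 1 (q (x - u) / q x) \<partial>lborel) * q x
      = (\<integral>u. indicator {..a} u * q u * min 1 (q (x - u) / q x) * q x \<partial>lborel)"
    by simp
  also have "\<dots> = (\<integral>u. indicator {..a} u * q u * min (q x) (q (x - u)) \<partial>lborel)"
    using assms by (intro Bochner_Integration.integral_cong refl) (auto simp: min_def field_simps)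
  finally have "ennreal ((\<integral>u. indicator {..a} u * q u * min 1 (q (x - u) / q x) \<partial>lborel) * q x)
      = (\<integral>\<^sup>+u. ennreal (indicator {..a} u * q u * min (q x) (q (x - u))) \<partial>lborel)"
    by (simp add: nn_integral_eq_integral[OF int] nonneg)
  also have "\<dots> \<le> conv_head a x"
    unfolding conv_head_def
    by (intro nn_integral_mono) (auto simp: indicator_def nonneg intro!: ennreal_leI mult_left_mono)
  finally show ?thesis .
qed

lemma eventually_conv_head_ge:
  assumes "0 < d"
  shows "\<forall>\<^sub>F x in at_top. ennreal ((lower_mass a - d) * q x) \<le> conv_head a x"
proof -
  have "\<forall>\<^sub>F x in at_top. lower_mass a - d < (\<integral>u. indicator {..a} u * q u * min 1 (q (x - u) / q x) \<partial>lborel)"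
    using tendsto_truncated_head by (rule order_tendstoD) (use assms in simp)
  then show ?thesis
    using eventually_pos
  proof eventually_elim
    case (elim x)
    have "ennreal ((lower_mass a - d) * q x)
        \<le> ennreal ((\<integral>u. indicator {..a} u * q u * min 1 (q (x - u) / q x) \<partial>lborel) * q x)"
      using elim by (intro ennreal_leI mult_right_mono) auto
    also have "\<dots> \<le> conv_head a x"
      by (rule truncated_head_le_conv_head[OF elim(2)])
    finally show ?case .
  qed
qed

lemma nn_integral_conv_split:
  assumes "2 * a < x"
  shows "(\<integral>\<^sup>+u. ennreal (q (x - u) * q u) \<partial>lborel) = conv_middle a x + 2 * conv_head a x"
proof -
  have split: "ennreal (q (x - u) * q u) = indicator {a<..} u * indicator {a<..} (x - u) * ennreal (q u * q (x - u))
     + indicator {..a} u * ennreal (q u * q (x - u)) + indicator {..a} (x - u) * ennreal (q (x - u) * q (x - (x - u)))" for u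
    using assms by (auto simp: indicator_def mult.commute)
  have "(\<integral>\<^sup>+u. indicator {..a} (x - u) * ennreal (q (x - u) * q (x - (x - u))) \<partial>lborel) = conv_head a x"
    unfolding conv_head_def
    using nn_integral_real_affine[of "\<lambda>u. indicator {..a} u * ennreal (q u * q (x - u))" "-1" x] by simp
  then show ?thesis
    unfolding conv_middle_def conv_head_def by (subst split) (simp add: nn_integral_add mult_2 add.assoc)
qed

lemma eventually_nn_integral_fconv:
  "\<forall>\<^sub>F x in at_top. ennreal (fconv q q x) = (\<integral>\<^sup>+u. ennreal (q (x - u) * q u) \<partial>lborel)"
proof -
  have "\<forall>\<^sub>F x in at_top. 1 / 2 < fconv q q x / (2 * q x)"
    using conv_ratio by (rule order_tendstoD) simp
  then show ?thesis
    using eventually_pos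
  proof eventually_elim
    case (elim x)
    then have "fconv q q x \<noteq> 0" by auto
    then have "integrable lborel (\<lambda>u. q (x - u) * q u)"
      unfolding fconv_def using not_integrable_integral_eq by blast
    then show ?case
      unfolding fconv_def by (simp add: nn_integral_eq_integral nonneg)
  qed
qed

lemma conv_middle_small:
  assumes "0 < \<eta>"
  shows "\<exists>A. \<forall>a\<ge>A. \<forall>\<^sub>F x in at_top. conv_middle a x \<le> ennreal (\<eta> * q x)"
proof -
  define d where "d = \<eta> / 6"
  have d: "0 < d" using assms by (simp add: d_def)
  have "\<forall>\<^sub>F a in at_top. 1 - \<eta> / 4 < lower_mass a"
    using tendsto_lower_mass by (rule order_tendstoD) (use assms in simp)
  then obtain A where A: "\<And>a. A \<le> a \<Longrightarrow> 1 - \<eta> / 4 < lower_mass a"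
    by (auto simp: eventually_at_top_linorder)
  have "\<forall>\<^sub>F x in at_top. conv_middle a x \<le> ennreal (\<eta> * q x)" if "A \<le> a" for a
  proof -
    have "\<forall>\<^sub>F x in at_top. fconv q q x / (2 * q x) < 1 + d / 2"
      using conv_ratio by (rule order_tendstoD) (use d in simp)
    moreover have "\<forall>\<^sub>F x in at_top. 2 * a < x" by (rule eventually_gt_at_top)
    moreover note eventually_nn_integral_fconv eventually_conv_head_ge[OF d, of a] eventually_pos
    ultimately show ?thesis
    proof eventually_elim
      case (elim x)
      have "conv_middle a x \<le> ennreal ((2 + d) * q x - 2 * ((lower_mass a - d) * q x))"
      proof (rule ennreal_le_diff_of_sum)
        show "ennreal (fconv q q x) = conv_middle a x + 2 * conv_head a x"
          using elim(2,3) nn_integral_conv_split by simp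
        show "fconv q q x \<le> (2 + d) * q x"
          using elim(1,5) by (simp add: divide_less_eq field_simps)
      qed (use elim(4) in simp)
      also have "\<dots> \<le> ennreal (\<eta> * q x)"
      proof (intro ennreal_leI)
        have "(2 + d) * q x - 2 * ((lower_mass a - d) * q x) = (2 * (1 - lower_mass a) + 3 * d) * q x"
          by (simp add: algebra_simps)
        also have "\<dots> \<le> \<eta> * q x"
          using A[OF that] elim(5) by (intro mult_right_mono) (auto simp: d_def)
        finally show "(2 + d) * q x - 2 * ((lower_mass a - d) * q x) \<le> \<eta> * q x" .
      qed
      finally show ?case .
    qed
  qed
  then show ?thesis by blast
qed

end

section \<open>Distributions on the half-line\<close>

locale nonneg_distribution = prob_space \<mu> for \<mu> :: "real measure" +
  assumes sets_eq_borel[measurable_cong]: "sets \<mu> = sets borel"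
    and measure_negative: "measure \<mu> {..<0} = 0"
begin

lemma space_eq_UNIV[simp]: "space \<mu> = UNIV"
  using sets_eq_imp_space_eq[OF sets_eq_borel] by simp

lemma prob_UNIV[simp]: "prob UNIV = 1"
  using prob_space by simp

lemma AE_nonneg: "AE y in \<mu>. 0 \<le> y"
proof -
  have "{..<0::real} \<in> null_sets \<mu>"
    using measure_negative by (simp add: null_sets_def emeasure_eq_measure sets_eq_borel)
  then show ?thesis by (rule AE_I') auto
qed

lemma measure_atMost_close_to_1:
  assumes "0 < \<epsilon>"
  obtains a where "0 \<le> a" "1 - \<epsilon> < measure \<mu> {..a}"
proof -
  interpret real_distribution \<mu> by unfold_locales (simp add: sets_eq_borel)
  have "\<forall>\<^sub>F a in at_top. 1 - \<epsilon> < measure \<mu> {..a}"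
    using cdf_lim_at_top_prob assms unfolding cdf_def by (intro order_tendstoD) auto
  then obtain a0 where "\<And>a. a0 \<le> a \<Longrightarrow> 1 - \<epsilon> < measure \<mu> {..a}"
    by (auto simp: eventually_at_top_linorder)
  then show ?thesis
    using that[of "max a0 0"] by simp
qed

definition conv_mu :: "(real \<Rightarrow> real) \<Rightarrow> real \<Rightarrow> real" where
  "conv_mu \<psi> x = (\<integral>y. \<psi> (x - y) \<partial>\<mu>)"

lemma ennreal_conv_mu:
  assumes "bounded_kernel B \<psi>"
  shows "ennreal (conv_mu \<psi> x) = (\<integral>\<^sup>+y. ennreal (\<psi> (x - y)) \<partial>\<mu>)"
  unfolding conv_mu_def using bounded_kernelD[OF assms]
  by (intro ennreal_integral_bounded[where B=B]) (auto intro: finite_measure_axioms)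

lemma bounded_kernel_conv_mu:
  assumes "bounded_kernel B \<psi>"
  shows "bounded_kernel B (conv_mu \<psi>)"
proof -
  note \<psi> = bounded_kernelD[OF assms]
  have [measurable]: "\<psi> \<in> borel_measurable borel" by (rule \<psi>(1))
  have "conv_mu \<psi> x \<le> (\<integral>y. B \<partial>\<mu>)" for x
    unfolding conv_mu_def using \<psi>(3)
    by (intro integral_mono) (auto intro!: integrable_const_bound[where B=B] simp: \<psi>(2))
  then show ?thesis
    unfolding bounded_kernel_def
    by (auto simp: conv_mu_def \<psi>(2) intro!: integral_nonneg) (unfold conv_mu_def, measurable)
qed

lemma ennreal_conv_mu_conv_mu:
  assumes "bounded_kernel B \<psi>"
  shows "ennreal (conv_mu (conv_mu \<psi>) x) = (\<integral>\<^sup>+y. \<integral>\<^sup>+z. ennreal (\<psi> (x - y - z)) \<partial>\<mu> \<partial>\<mu>)"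
  by (simp add: ennreal_conv_mu[OF bounded_kernel_conv_mu[OF assms]] ennreal_conv_mu[OF assms])

text \<open>The density \<open>p\<close> of the proposition is \<open>\<lambda>x. window c x / c\<close>.\<close>

definition window :: "real \<Rightarrow> real \<Rightarrow> real" where
  "window c x = measure \<mu> {x - c<..x}"

lemma window_eq_conv_mu: "window c = conv_mu (indicator {0..<c})"
proof
  fix x
  have "(\<lambda>y. indicator {0..<c} (x - y) :: real) = indicator {x - c<..x}"
    by (auto simp: indicator_def fun_eq_iff)
  then show "window c x = conv_mu (indicator {0..<c}) x"
    by (simp add: window_def conv_mu_def sets_eq_borel)
qed

lemma bounded_kernel_window: "bounded_kernel 1 (window c)"
  unfolding window_eq_conv_mu by (intro bounded_kernel_conv_mu bounded_kernel_indicator)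

lemmas window_measurable[measurable] = bounded_kernelD(1)[OF bounded_kernel_window]
lemmas window_nonneg = bounded_kernelD(2)[OF bounded_kernel_window]

lemma ennreal_window: "ennreal (window c x) = (\<integral>\<^sup>+y. indicator {x - c<..x} y \<partial>\<mu>)"
  by (simp add: window_def emeasure_eq_measure sets_eq_borel)

lemma window_mono: "c1 \<le> c2 \<Longrightarrow> window c1 x \<le> window c2 x"
  unfolding window_def by (intro finite_measure_mono) (auto simp: sets_eq_borel)

lemma window_le_window: "{x' - c'<..x'} \<subseteq> {x - c<..x} \<Longrightarrow> window c' x' \<le> window c x"
  unfolding window_def by (intro finite_measure_mono) (auto simp: sets_eq_borel)

lemma window_mult:
  assumes h: "0 < h"
  shows "window (real m * h) x = (\<Sum>k<m. window h (x - real k * h))"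
proof (induction m)
  case 0
  then show ?case by (simp add: window_def)
next
  case (Suc m)
  have "{x - real (Suc m) * h<..x} = {x - real m * h<..x} \<union> {x - real m * h - h<..x - real m * h}"
  proof -
    have hm: "0 \<le> h * real m" using h by simp
    show ?thesis using h by (auto simp: algebra_simps) (use hm in linarith)
  qed
  then have "window (real (Suc m) * h) x = window (real m * h) x + window h (x - real m * h)"
    unfolding window_def by (simp add: finite_measure_Union sets_eq_borel)
  then show ?case using Suc by simp
qed

lemma L_Delta_iff_class_L_window: "L_Delta c \<mu> \<longleftrightarrow> class_L (window c)"
  using class_L_shift_iff[of "window c" c] by (simp add: L_Delta_def window_def)

lemma measure_conv_window: "measure (\<mu> \<star> \<mu>) {x - c<..x} = conv_mu (window c) x"
proof -
  have fin: "finite_measure \<mu>" by (rule finite_measure_axioms)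
  interpret C: finite_measure "\<mu> \<star> \<mu>"
    by (rule convolution_finite) (auto simp: fin sets_eq_borel)
  have "ennreal (measure (\<mu> \<star> \<mu>) {x - c<..x}) = (\<integral>\<^sup>+y. \<integral>\<^sup>+z. indicator {x - c<..x} (y + z) \<partial>\<mu> \<partial>\<mu>)"
    by (simp add: C.emeasure_eq_measure[symmetric] convolution_emeasure' fin sets_eq_borel)
  also have "\<dots> = ennreal (conv_mu (window c) x)"
    unfolding window_eq_conv_mu ennreal_conv_mu_conv_mu[OF bounded_kernel_indicator]
    by (intro nn_integral_cong) (auto split: split_indicator)
  finally show ?thesis
    using bounded_kernelD(2)[OF bounded_kernel_conv_mu[OF bounded_kernel_window]] by simp
qed

lemma density_fun_window:
  assumes c: "0 < c"
  shows "density_fun (\<lambda>x. window c x / c)"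
proof -
  interpret Q: pair_sigma_finite \<mu> lborel ..
  have "(\<integral>\<^sup>+x. ennreal (window c x) \<partial>lborel) = (\<integral>\<^sup>+x. \<integral>\<^sup>+y. indicator {y..<y + c} x \<partial>\<mu> \<partial>lborel)"
    unfolding ennreal_window by (intro nn_integral_cong) (auto split: split_indicator)
  also have "\<dots> = (\<integral>\<^sup>+y. \<integral>\<^sup>+x. indicator {y..<y + c} x \<partial>lborel \<partial>\<mu>)"
    by (rule Q.Fubini') measurable
  also have "\<dots> = ennreal c"
    using c emeasure_space_1 by simp
  finally have "(\<integral>\<^sup>+x. ennreal (window c x) \<partial>lborel) = ennreal c" .
  moreover have "(\<integral>\<^sup>+x. ennreal (window c x / c) \<partial>lborel) = ennreal (1 / c) * (\<integral>\<^sup>+x. ennreal (window c x) \<partial>lborel)"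
    using c by (simp add: nn_integral_cmult[symmetric] ennreal_mult[symmetric] window_nonneg)
  ultimately show ?thesis
    unfolding density_fun_def using c by (simp add: window_nonneg ennreal_mult[symmetric])
qed

lemma conv_mu_local_integral:
  assumes "bounded_kernel B \<phi>" "0 \<le> c"
  shows "conv_mu (local_integral c \<phi>) x = local_integral c (conv_mu \<phi>) x"
proof -
  interpret pair_sigma_finite lborel \<mu> ..
  have [measurable]: "\<phi> \<in> borel_measurable borel" by (rule bounded_kernelD(1)[OF assms(1)])
  have "ennreal (conv_mu (local_integral c \<phi>) x)
      = (\<integral>\<^sup>+y. \<integral>\<^sup>+u. indicator {0..<c} u * ennreal (\<phi> (x - y - u)) \<partial>lborel \<partial>\<mu>)"
    by (simp add: ennreal_conv_mu[OF bounded_kernel_local_integral[OF assms]]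
        ennreal_local_integral[OF assms(1)])
  also have "\<dots> = (\<integral>\<^sup>+u. \<integral>\<^sup>+y. indicator {0..<c} u * ennreal (\<phi> (x - u - y)) \<partial>\<mu> \<partial>lborel)"
    by (subst Fubini') (auto intro!: nn_integral_cong simp: algebra_simps)
  also have "\<dots> = ennreal (local_integral c (conv_mu \<phi>) x)"
    by (simp add: ennreal_local_integral[OF bounded_kernel_conv_mu[OF assms(1)]]
        ennreal_conv_mu[OF assms(1)] nn_integral_cmult)
  finally show ?thesis
    using bounded_kernelD(2)[OF bounded_kernel_conv_mu[OF bounded_kernel_local_integral[OF assms]]]
      bounded_kernelD(2)[OF bounded_kernel_local_integral[OF bounded_kernel_conv_mu[OF assms(1)] assms(2)]]
    by simp
qed

lemma conv_mu_tri:
  assumes "0 < c"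
  shows "conv_mu (tri c) x = local_integral c (window c) x"
  using conv_mu_local_integral[OF bounded_kernel_indicator[of c]] assms
  by (simp add: tri_eq_local_integral window_eq_conv_mu)

lemma conv_mu_conv_mu_tri:
  assumes "0 < c"
  shows "conv_mu (conv_mu (tri c)) x = local_integral c (conv_mu (window c)) x"
proof -
  have "conv_mu (tri c) = local_integral c (window c)"
    using conv_mu_tri[OF assms] by auto
  then show ?thesis
    using conv_mu_local_integral[OF bounded_kernel_window[of c]] assms by simp
qed

lemma nn_integral_window_product:
  fixes \<alpha> \<beta> :: "real \<Rightarrow> ennreal"
  assumes c: "0 < c" and [measurable]: "\<alpha> \<in> borel_measurable borel" "\<beta> \<in> borel_measurable borel"
  shows "(\<integral>\<^sup>+u. (\<integral>\<^sup>+y. \<alpha> y * indicator {u - c<..u} y \<partial>\<mu>) * (\<integral>\<^sup>+z. \<beta> z * indicator {x - u - c<..x - u} z \<partial>\<mu>) \<partial>lborel)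
    = (\<integral>\<^sup>+y. \<integral>\<^sup>+z. \<alpha> y * \<beta> z * ennreal (tri c (x - y - z)) \<partial>\<mu> \<partial>\<mu>)"
proof -
  interpret P: pair_sigma_finite lborel \<mu> ..
  interpret Q: pair_sigma_finite \<mu> lborel ..
  let ?I = "\<lambda>y z u. indicator {y..<y + c} u * indicator {x - z - c<..x - z} u :: ennreal"
  have "(\<integral>\<^sup>+u. (\<integral>\<^sup>+y. \<alpha> y * indicator {u - c<..u} y \<partial>\<mu>) * (\<integral>\<^sup>+z. \<beta> z * indicator {x - u - c<..x - u} z \<partial>\<mu>) \<partial>lborel)
    = (\<integral>\<^sup>+u. \<integral>\<^sup>+y. \<integral>\<^sup>+z. \<alpha> y * \<beta> z * ?I y z u \<partial>\<mu> \<partial>\<mu> \<partial>lborel)"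
    by (subst nn_integral_multc[symmetric], simp, intro nn_integral_cong)
       (subst nn_integral_cmult[symmetric], auto intro!: nn_integral_cong split: split_indicator)
  also have "\<dots> = (\<integral>\<^sup>+y. \<integral>\<^sup>+u. \<integral>\<^sup>+z. \<alpha> y * \<beta> z * ?I y z u \<partial>\<mu> \<partial>lborel \<partial>\<mu>)"
    by (rule Q.Fubini') measurable
  also have "\<dots> = (\<integral>\<^sup>+y. \<integral>\<^sup>+z. \<integral>\<^sup>+u. \<alpha> y * \<beta> z * ?I y z u \<partial>lborel \<partial>\<mu> \<partial>\<mu>)"
    by (intro nn_integral_cong Q.Fubini') measurable
  also have "\<dots> = (\<integral>\<^sup>+y. \<integral>\<^sup>+z. \<alpha> y * \<beta> z * ennreal (tri c (x - y - z)) \<partial>\<mu> \<partial>\<mu>)"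
  proof -
    have "ennreal (tri c (x - y - z)) = (\<integral>\<^sup>+u. ?I y z u \<partial>lborel)" for y z
      using nn_integral_tri[OF c, of "x - z" y] by (simp add: algebra_simps)
    then show ?thesis by (simp add: nn_integral_cmult)
  qed
  finally show ?thesis .
qed

lemma fconv_window:
  assumes c: "0 < c"
  shows "fconv (window c) (window c) x = conv_mu (conv_mu (tri c)) x"
proof -
  have "(\<integral>\<^sup>+u. ennreal (window c (x - u) * window c u) \<partial>lborel)
      = (\<integral>\<^sup>+u. (\<integral>\<^sup>+y. 1 * indicator {u - c<..u} y \<partial>\<mu>) * (\<integral>\<^sup>+z. 1 * indicator {x - u - c<..x - u} z \<partial>\<mu>) \<partial>lborel)"
    by (intro nn_integral_cong) (simp add: ennreal_window[symmetric] ennreal_mult window_nonneg mult.commute)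
  also have "\<dots> = (\<integral>\<^sup>+y. \<integral>\<^sup>+z. 1 * 1 * ennreal (tri c (x - y - z)) \<partial>\<mu> \<partial>\<mu>)"
    by (rule nn_integral_window_product[OF c]) auto
  also have "\<dots> = ennreal (conv_mu (conv_mu (tri c)) x)"
    using c by (simp add: ennreal_conv_mu_conv_mu[OF bounded_kernel_tri])
  finally have nn: "(\<integral>\<^sup>+u. ennreal (window c (x - u) * window c u) \<partial>lborel)
      = ennreal (conv_mu (conv_mu (tri c)) x)" .
  have "integrable lborel (\<lambda>u. window c (x - u) * window c u)"
    by (rule integrableI_nonneg) (auto simp: nn window_nonneg)
  from nn_integral_eq_integral[OF this] nn show ?thesis
    using c bounded_kernelD(2)[OF bounded_kernel_conv_mu[OF bounded_kernel_conv_mu[OF bounded_kernel_tri]]]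
    by (simp add: fconv_def window_nonneg integral_nonneg)
qed

lemma nn_integral_sum_split:
  fixes \<phi> :: "real \<Rightarrow> ennreal"
  assumes [measurable]: "\<phi> \<in> borel_measurable borel" and "0 \<le> a"
    and vanish: "\<And>w. w \<le> 2 * a \<Longrightarrow> \<phi> w = 0"
  shows "(\<integral>\<^sup>+y. \<integral>\<^sup>+z. \<phi> (y + z) \<partial>\<mu> \<partial>\<mu>) =
    2 * (\<integral>\<^sup>+y. indicator {..a} y * (\<integral>\<^sup>+z. \<phi> (y + z) \<partial>\<mu>) \<partial>\<mu>) +
    (\<integral>\<^sup>+y. \<integral>\<^sup>+z. indicator {a<..} y * indicator {a<..} z * \<phi> (y + z) \<partial>\<mu> \<partial>\<mu>)"
proof -
  interpret P: pair_sigma_finite \<mu> \<mu> ..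
  let ?S = "\<lambda>y z. indicator {..a} y * \<phi> (y + z)"
  let ?L = "\<lambda>y z. indicator {a<..} y * indicator {a<..} z * \<phi> (y + z)"
  have split: "\<phi> (y + z) = ?S y z + ?S z y + ?L y z" for y z
    using vanish[of "y + z"] by (auto simp: indicator_def add.commute)
  have "(\<integral>\<^sup>+y. \<integral>\<^sup>+z. \<phi> (y + z) \<partial>\<mu> \<partial>\<mu>)
      = (\<integral>\<^sup>+y. \<integral>\<^sup>+z. ?S y z \<partial>\<mu> \<partial>\<mu>) + (\<integral>\<^sup>+y. \<integral>\<^sup>+z. ?S z y \<partial>\<mu> \<partial>\<mu>) + (\<integral>\<^sup>+y. \<integral>\<^sup>+z. ?L y z \<partial>\<mu> \<partial>\<mu>)"
    by (subst split) (simp add: nn_integral_add)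
  also have "(\<integral>\<^sup>+y. \<integral>\<^sup>+z. ?S z y \<partial>\<mu> \<partial>\<mu>) = (\<integral>\<^sup>+y. \<integral>\<^sup>+z. ?S y z \<partial>\<mu> \<partial>\<mu>)"
    by (rule P.Fubini') measurable
  also have "(\<integral>\<^sup>+y. \<integral>\<^sup>+z. ?S y z \<partial>\<mu> \<partial>\<mu>) = (\<integral>\<^sup>+y. indicator {..a} y * (\<integral>\<^sup>+z. \<phi> (y + z) \<partial>\<mu>) \<partial>\<mu>)"
    by (simp add: nn_integral_cmult)
  finally show ?thesis by (simp add: mult_2)
qed

definition conv_mu_head :: "(real \<Rightarrow> real) \<Rightarrow> real \<Rightarrow> real \<Rightarrow> real" where
  "conv_mu_head \<phi> a x = (\<integral>y. indicator {..a} y * \<phi> (x - y) \<partial>\<mu>)"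

definition conv_mu2_tail :: "(real \<Rightarrow> real) \<Rightarrow> real \<Rightarrow> real \<Rightarrow> real" where
  "conv_mu2_tail \<psi> a x = (\<integral>y. indicator {a<..} y * (\<integral>z. indicator {a<..} z * \<psi> (x - y - z) \<partial>\<mu>) \<partial>\<mu>)"

lemma ennreal_conv_mu_head:
  assumes "bounded_kernel B \<phi>"
  shows "ennreal (conv_mu_head \<phi> a x) = (\<integral>\<^sup>+y. indicator {..a} y * ennreal (\<phi> (x - y)) \<partial>\<mu>)"
proof -
  note \<phi> = bounded_kernelD[OF assms]
  have [measurable]: "\<phi> \<in> borel_measurable borel" by (rule \<phi>(1))
  have "ennreal (conv_mu_head \<phi> a x) = (\<integral>\<^sup>+y. ennreal (indicator {..a} y * \<phi> (x - y)) \<partial>\<mu>)"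
    unfolding conv_mu_head_def using \<phi>(2-4)
    by (intro ennreal_integral_bounded[where B=B]) (auto intro: finite_measure_axioms simp: indicator_def)
  then show ?thesis by (simp add: ennreal_indicator_times)
qed

lemma ennreal_conv_mu2_tail:
  assumes "bounded_kernel B \<psi>"
  shows "ennreal (conv_mu2_tail \<psi> a x)
    = (\<integral>\<^sup>+y. \<integral>\<^sup>+z. indicator {a<..} y * indicator {a<..} z * ennreal (\<psi> (x - y - z)) \<partial>\<mu> \<partial>\<mu>)"
proof -
  note \<psi> = bounded_kernelD[OF assms]
  have [measurable]: "\<psi> \<in> borel_measurable borel" by (rule \<psi>(1))
  let ?inner = "\<lambda>y. \<integral>z. indicator {a<..} z * \<psi> (x - y - z) \<partial>\<mu>"
  have inner: "ennreal (?inner y) = (\<integral>\<^sup>+z. indicator {a<..} z * ennreal (\<psi> (x - y - z)) \<partial>\<mu>)" for y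
  proof -
    have "ennreal (?inner y) = (\<integral>\<^sup>+z. ennreal (indicator {a<..} z * \<psi> (x - y - z)) \<partial>\<mu>)"
      using \<psi>(2-4)
      by (intro ennreal_integral_bounded[where B=B]) (auto intro: finite_measure_axioms simp: indicator_def)
    then show ?thesis by (simp add: ennreal_indicator_times)
  qed
  have inner_bounds: "0 \<le> ?inner y" "?inner y \<le> B" for y
  proof -
    show "0 \<le> ?inner y" using \<psi>(2) by (auto intro!: integral_nonneg simp: indicator_def)
    have "?inner y \<le> (\<integral>z. B \<partial>\<mu>)"
      using \<psi>(2-4) by (intro integral_mono) (auto intro!: integrable_const_bound[where B=B] simp: indicator_def)
    then show "?inner y \<le> B" by simp
  qed
  have "ennreal (conv_mu2_tail \<psi> a x) = (\<integral>\<^sup>+y. ennreal (indicator {a<..} y * ?inner y) \<partial>\<mu>)"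
    unfolding conv_mu2_tail_def using inner_bounds \<psi>(4)
    by (intro ennreal_integral_bounded[where B=B]) (auto intro: finite_measure_axioms simp: indicator_def)
  also have "\<dots> = (\<integral>\<^sup>+y. indicator {a<..} y * ennreal (?inner y) \<partial>\<mu>)"
    by (intro nn_integral_cong) (simp split: split_indicator)
  finally show ?thesis
    by (simp add: inner nn_integral_cmult[symmetric] mult.assoc)
qed

lemma conv_mu_head_nonneg: "bounded_kernel B \<phi> \<Longrightarrow> 0 \<le> conv_mu_head \<phi> a x"
  unfolding conv_mu_head_def by (intro Bochner_Integration.integral_nonneg mult_nonneg_nonneg) (auto dest: bounded_kernelD(2))

lemma conv_mu2_tail_nonneg: "bounded_kernel B \<psi> \<Longrightarrow> 0 \<le> conv_mu2_tail \<psi> a x"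
  unfolding conv_mu2_tail_def by (intro Bochner_Integration.integral_nonneg mult_nonneg_nonneg) (auto dest: bounded_kernelD(2))

lemma conv_mu2_split:
  assumes \<psi>: "bounded_kernel B \<psi>" and "0 \<le> a" and vanish: "\<And>t. x - 2 * a \<le> t \<Longrightarrow> \<psi> t = 0"
  shows "conv_mu (conv_mu \<psi>) x = 2 * conv_mu_head (conv_mu \<psi>) a x + conv_mu2_tail \<psi> a x"
proof -
  have [measurable]: "\<psi> \<in> borel_measurable borel" by (rule bounded_kernelD(1)[OF \<psi>])
  have "ennreal (conv_mu (conv_mu \<psi>) x) = (\<integral>\<^sup>+y. \<integral>\<^sup>+z. ennreal (\<psi> (x - (y + z))) \<partial>\<mu> \<partial>\<mu>)"
    by (simp add: ennreal_conv_mu_conv_mu[OF \<psi>] diff_diff_eq)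
  also have "\<dots> = 2 * ennreal (conv_mu_head (conv_mu \<psi>) a x) + ennreal (conv_mu2_tail \<psi> a x)"
    by (subst nn_integral_sum_split) (use assms(2) vanish in \<open>simp_all add: ennreal_conv_mu[OF \<psi>]
        ennreal_conv_mu_head[OF bounded_kernel_conv_mu[OF \<psi>]] ennreal_conv_mu2_tail[OF \<psi>] diff_diff_eq\<close>)
  also have "\<dots> = ennreal (2 * conv_mu_head (conv_mu \<psi>) a x + conv_mu2_tail \<psi> a x)"
    using conv_mu_head_nonneg[OF bounded_kernel_conv_mu[OF \<psi>]] conv_mu2_tail_nonneg[OF \<psi>]
    by (simp add: ennreal_times_2 ennreal_plus[symmetric] del: ennreal_plus)
  finally show ?thesis
    using conv_mu_head_nonneg[OF bounded_kernel_conv_mu[OF \<psi>]] conv_mu2_tail_nonneg[OF \<psi>]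
      bounded_kernelD(2)[OF bounded_kernel_conv_mu[OF bounded_kernel_conv_mu[OF \<psi>]]]
    by (subst (asm) ennreal_inj) auto
qed

lemma conv_window_split:
  assumes "0 \<le> a" "c + 2 * a \<le> x"
  shows "conv_mu (window c) x = 2 * conv_mu_head (window c) a x + conv_mu2_tail (indicator {0..<c}) a x"
  unfolding window_eq_conv_mu
  by (rule conv_mu2_split[OF bounded_kernel_indicator]) (use assms in \<open>auto simp: indicator_def\<close>)

lemma conv_mu2_tri_split:
  assumes "0 \<le> a" "0 \<le> c" "2 * c + 2 * a \<le> x"
  shows "conv_mu (conv_mu (tri c)) x = 2 * conv_mu_head (conv_mu (tri c)) a x + conv_mu2_tail (tri c) a x"
  by (rule conv_mu2_split[OF bounded_kernel_tri[OF assms(2)]]) (use assms in \<open>auto intro: tri_eq_0\<close>)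

lemma conv_mu2_tail_indicator_le:
  assumes c: "0 < c"
  shows "c * conv_mu2_tail (indicator {0..<c}) a x \<le> conv_mu2_tail (tri c) a x + conv_mu2_tail (tri c) a (x + c)"
proof -
  let ?I = "\<lambda>y z. indicator {a<..} y * indicator {a<..} z :: ennreal"
  have pointwise: "ennreal c * ennreal (indicator {0..<c} t) \<le> ennreal (tri c t) + ennreal (tri c (t + c))" for t
    using tri_add_shift[of t c] c
    by (cases "t \<in> {0..<c}") (auto simp: ennreal_plus[symmetric] tri_nonneg simp del: ennreal_plus)
  have "ennreal (c * conv_mu2_tail (indicator {0..<c}) a x)
      = ennreal c * ennreal (conv_mu2_tail (indicator {0..<c}) a x)"
    using c conv_mu2_tail_nonneg[OF bounded_kernel_indicator] by (simp add: ennreal_mult)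
  also have "\<dots> = (\<integral>\<^sup>+y. \<integral>\<^sup>+z. ennreal c * (?I y z * ennreal (indicator {0..<c} (x - y - z))) \<partial>\<mu> \<partial>\<mu>)"
    by (simp add: ennreal_conv_mu2_tail[OF bounded_kernel_indicator] nn_integral_cmult)
  also have "\<dots> \<le> (\<integral>\<^sup>+y. \<integral>\<^sup>+z. ?I y z * ennreal (tri c (x - y - z)) + ?I y z * ennreal (tri c (x + c - y - z)) \<partial>\<mu> \<partial>\<mu>)"
  proof (intro nn_integral_mono)
    fix y z
    have "ennreal c * (?I y z * ennreal (indicator {0..<c} (x - y - z)))
        = ?I y z * (ennreal c * ennreal (indicator {0..<c} (x - y - z)))"
      by (simp add: mult_ac)
    also have "\<dots> \<le> ?I y z * (ennreal (tri c (x - y - z)) + ennreal (tri c (x - y - z + c)))"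
      by (intro mult_left_mono pointwise) auto
    finally show "ennreal c * (?I y z * ennreal (indicator {0..<c} (x - y - z)))
        \<le> ?I y z * ennreal (tri c (x - y - z)) + ?I y z * ennreal (tri c (x + c - y - z))"
      by (simp add: distrib_left algebra_simps)
  qed
  also have "\<dots> = ennreal (conv_mu2_tail (tri c) a x + conv_mu2_tail (tri c) a (x + c))"
    using c conv_mu2_tail_nonneg[OF bounded_kernel_tri]
    by (simp add: nn_integral_add ennreal_conv_mu2_tail[OF bounded_kernel_tri] mult.assoc)
  finally show ?thesis
    using c conv_mu2_tail_nonneg[OF bounded_kernel_tri] by (subst (asm) ennreal_le_iff) auto
qed

lemma conv_mu2_tail_tri_le:
  assumes c: "0 < c"
  shows "ennreal (conv_mu2_tail (tri c) a x)
    \<le> (\<integral>\<^sup>+u. indicator {a<..} u * indicator {a<..} (x - u) * ennreal (window c u * window c (x - u)) \<partial>lborel)"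
proof -
  have restricted_window: "(\<integral>\<^sup>+y. indicator {a<..} y * indicator {v - c<..v} y \<partial>\<mu>) \<le> indicator {a<..} v * ennreal (window c v)" for v
  proof (cases "a < v")
    case True
    have "(\<integral>\<^sup>+y. indicator {a<..} y * indicator {v - c<..v} y \<partial>\<mu>) \<le> (\<integral>\<^sup>+y. indicator {v - c<..v} y \<partial>\<mu>)"
      by (intro nn_integral_mono) (auto simp: indicator_def)
    then show ?thesis using True by (simp add: ennreal_window)
  next
    case False
    then have "(\<integral>\<^sup>+y. indicator {a<..} y * indicator {v - c<..v} y \<partial>\<mu>) = (\<integral>\<^sup>+y. 0 \<partial>\<mu>)"
      by (intro nn_integral_cong) (auto simp: indicator_def)
    then show ?thesis by simp
  qed
  have "ennreal (conv_mu2_tail (tri c) a x)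
      = (\<integral>\<^sup>+u. (\<integral>\<^sup>+y. indicator {a<..} y * indicator {u - c<..u} y \<partial>\<mu>)
          * (\<integral>\<^sup>+z. indicator {a<..} z * indicator {x - u - c<..x - u} z \<partial>\<mu>) \<partial>lborel)"
    using c by (simp add: nn_integral_window_product ennreal_conv_mu2_tail[OF bounded_kernel_tri])
  also have "\<dots> \<le> (\<integral>\<^sup>+u. (indicator {a<..} u * ennreal (window c u))
      * (indicator {a<..} (x - u) * ennreal (window c (x - u))) \<partial>lborel)"
    by (intro nn_integral_mono mult_mono restricted_window) auto
  also have "\<dots> = (\<integral>\<^sup>+u. indicator {a<..} u * indicator {a<..} (x - u) * ennreal (window c u * window c (x - u)) \<partial>lborel)"
    by (intro nn_integral_cong) (simp add: ennreal_mult window_nonneg mult_ac)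
  finally show ?thesis .
qed

lemma conv_mu2_tail_tri_le_conv_middle:
  assumes c: "0 < c" and q: "subexponential_density q"
    and window_le: "\<And>z. a < z \<Longrightarrow> window c z \<le> 2 * c * q z"
  shows "ennreal (conv_mu2_tail (tri c) a x) \<le> ennreal (4 * c\<^sup>2) * subexponential_density.conv_middle q a x"
proof -
  interpret q: subexponential_density q by (rule q)
  have "ennreal (conv_mu2_tail (tri c) a x)
      \<le> (\<integral>\<^sup>+u. indicator {a<..} u * indicator {a<..} (x - u) * ennreal (window c u * window c (x - u)) \<partial>lborel)"
    by (rule conv_mu2_tail_tri_le[OF c])
  also have "\<dots> \<le> (\<integral>\<^sup>+u. ennreal (4 * c\<^sup>2) * (indicator {a<..} u * indicator {a<..} (x - u) * ennreal (q u * q (x - u))) \<partial>lborel)"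
  proof (intro nn_integral_mono)
    fix u
    show "indicator {a<..} u * indicator {a<..} (x - u) * ennreal (window c u * window c (x - u))
      \<le> ennreal (4 * c\<^sup>2) * (indicator {a<..} u * indicator {a<..} (x - u) * ennreal (q u * q (x - u)))"
    proof (cases "a < u \<and> a < x - u")
      case True
      have "window c u * window c (x - u) \<le> (2 * c * q u) * (2 * c * q (x - u))"
        using True window_le[of u] window_le[of "x - u"] c
        by (intro mult_mono) (auto simp: window_nonneg q.nonneg)
      then show ?thesis
        using True c by (simp add: ennreal_mult[symmetric] q.nonneg power2_eq_square mult_ac)
    qed (auto simp: indicator_def)
  qed
  also have "\<dots> = ennreal (4 * c\<^sup>2) * q.conv_middle a x"
    unfolding q.conv_middle_def by (rule nn_integral_cmult) measurable
  finally show ?thesis .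
qed

end

section \<open>Long-tailed windows\<close>

locale long_tailed_window = nonneg_distribution +
  fixes c :: real
  assumes c_pos: "0 < c" and class_L_window: "class_L (window c)"
begin

lemma window_eventually_pos: "\<forall>\<^sub>F x in at_top. 0 < window c x"
  using class_LD(3)[OF class_L_window] .

lemma window_shift_ratio: "((\<lambda>x. window c (x + b) / window c x) \<longlongrightarrow> 1) at_top"
  using class_LD(4)[OF class_L_window] .

lemma window_shift_le: "\<forall>\<^sub>F x in at_top. window c (x + b) \<le> 2 * window c x"
proof -
  have "\<forall>\<^sub>F x in at_top. window c (x + b) / window c x < 2"
    using window_shift_ratio[of b] by (rule order_tendstoD) simp
  then show ?thesis
    using window_eventually_pos by eventually_elim (auto simp: divide_less_eq)
qed

text \<open>For a general function in \<open>L\<close> this local uniformity would need Karamata's uniform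
  convergence theorem; for windows it follows by covering \<open>(x - b - c, x]\<close> with finitely many
  shifted windows.\<close>

lemma window_local_bound:
  assumes "0 \<le> b"
  shows "\<exists>B\<ge>0. \<forall>\<^sub>F x in at_top. \<forall>y\<in>{0..b}. window c (x - y) \<le> B * window c x"
proof -
  define N where "N = nat \<lceil>b / c\<rceil> + 1"
  have "b \<le> real (nat \<lceil>b / c\<rceil>) * c"
    using c_pos by (simp add: pos_divide_le_eq[symmetric]) linarith
  then have N: "b + c \<le> real N * c" unfolding N_def by (simp add: algebra_simps)
  have "\<forall>\<^sub>F x in at_top. \<forall>k\<in>{..<N}. window c (x + - (real k * c)) \<le> 2 * window c x"
    by (intro eventually_ball_finite ballI window_shift_le) auto
  then have "\<forall>\<^sub>F x in at_top. \<forall>y\<in>{0..b}. window c (x - y) \<le> (2 * real N) * window c x"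
  proof eventually_elim
    case (elim x)
    show ?case
    proof
      fix y assume "y \<in> {0..b}"
      then have "window c (x - y) \<le> window (real N * c) x"
        using N by (intro window_le_window) auto
      also have "\<dots> = (\<Sum>k<N. window c (x - real k * c))"
        by (rule window_mult[OF c_pos])
      also have "\<dots> \<le> (\<Sum>k<N. 2 * window c x)"
        using elim by (intro sum_mono) auto
      finally show "window c (x - y) \<le> (2 * real N) * window c x" by simp
    qed
  qed
  moreover have "0 \<le> 2 * real N" by simp
  ultimately show ?thesis by blast
qed

lemma tendsto_shift_div_window:
  assumes "((\<lambda>x. h x / window c x) \<longlongrightarrow> L) at_top"
  shows "((\<lambda>x. h (x - y) / window c x) \<longlongrightarrow> L) at_top"
proof -
  have "((\<lambda>x. h (x + - y) / window c (x + - y) * (window c (x + - y) / window c x)) \<longlongrightarrow> L * 1) at_top"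
    by (intro tendsto_mult tendsto_shift_at_top[OF assms] window_shift_ratio)
  moreover have "\<forall>\<^sub>F x in at_top.
      h (x + - y) / window c (x + - y) * (window c (x + - y) / window c x) = h (x - y) / window c x"
    using eventually_shift_at_top[OF window_eventually_pos, of "-y"] by eventually_elim simp
  ultimately show ?thesis
    by (simp add: Lim_transform_eventually)
qed

lemma eventually_abs_shift_le_window:
  assumes lim: "((\<lambda>x. h x / window c x) \<longlongrightarrow> L) at_top" and "0 \<le> b"
  obtains B where "0 \<le> B" "\<forall>\<^sub>F x in at_top. \<forall>y\<in>{0..b}. \<bar>h (x - y)\<bar> \<le> B * window c x"
proof -
  obtain B where "0 \<le> B" and B: "\<forall>\<^sub>F x in at_top. \<forall>y\<in>{0..b}. window c (x - y) \<le> B * window c x"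
    using window_local_bound[OF \<open>0 \<le> b\<close>] by blast
  have "\<forall>\<^sub>F x in at_top. dist (h x / window c x) L < 1"
    using lim by (rule tendstoD) simp
  then have "\<forall>\<^sub>F z in at_top. \<bar>h z\<bar> \<le> (\<bar>L\<bar> + 1) * window c z"
    using window_eventually_pos
  proof eventually_elim
    case (elim z)
    then have "\<bar>h z / window c z\<bar> \<le> \<bar>L\<bar> + 1"
      using abs_triangle_ineq[of "h z / window c z - L" L] by (simp add: dist_real_def)
    then show ?case using elim(2) by (simp add: abs_divide divide_le_eq)
  qed
  then obtain N where N: "\<And>z. N \<le> z \<Longrightarrow> \<bar>h z\<bar> \<le> (\<bar>L\<bar> + 1) * window c z"
    by (auto simp: eventually_at_top_linorder)
  have "\<forall>\<^sub>F x in at_top. N + b \<le> x" by (rule eventually_ge_at_top)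
  then have "\<forall>\<^sub>F x in at_top. \<forall>y\<in>{0..b}. \<bar>h (x - y)\<bar> \<le> ((\<bar>L\<bar> + 1) * B) * window c x"
    using B
  proof eventually_elim
    case (elim x)
    show ?case
    proof
      fix y assume y: "y \<in> {0..b}"
      have "\<bar>h (x - y)\<bar> \<le> (\<bar>L\<bar> + 1) * window c (x - y)"
        using N[of "x - y"] elim(1) y by simp
      also have "\<dots> \<le> (\<bar>L\<bar> + 1) * (B * window c x)"
        using elim(2) y by (intro mult_left_mono) auto
      finally show "\<bar>h (x - y)\<bar> \<le> ((\<bar>L\<bar> + 1) * B) * window c x" by simp
    qed
  qed
  with \<open>0 \<le> B\<close> show ?thesis
    by (intro that[of "(\<bar>L\<bar> + 1) * B"]) auto
qed

lemma tendsto_integral_div_window: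
  fixes \<nu> :: "real measure"
  assumes sets_\<nu>: "sets \<nu> = sets borel" and S: "S \<in> sets borel" "emeasure \<nu> S < \<infinity>"
    and support: "AE y in \<nu>. y \<in> S \<longrightarrow> 0 \<le> y \<and> y \<le> b" and "0 \<le> b"
    and [measurable]: "h \<in> borel_measurable borel"
    and lim: "((\<lambda>x. h x / window c x) \<longlongrightarrow> L) at_top"
  shows "((\<lambda>x. (\<integral>y. indicator S y * h (x - y) \<partial>\<nu>) / window c x) \<longlongrightarrow> L * measure \<nu> S) at_top"
proof -
  have [measurable_cong]: "sets \<nu> = sets borel" by (rule sets_\<nu>)
  obtain B where "0 \<le> B" and B: "\<forall>\<^sub>F x in at_top. \<forall>y\<in>{0..b}. \<bar>h (x - y)\<bar> \<le> B * window c x"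
    using eventually_abs_shift_le_window[OF lim \<open>0 \<le> b\<close>] by blast
  have "((\<lambda>x. \<integral>y. indicator S y * (h (x - y) / window c x) \<partial>\<nu>) \<longlongrightarrow> (\<integral>y. indicator S y * L \<partial>\<nu>)) at_top"
  proof (rule integral_dominated_convergence_at_top[where w="\<lambda>y. B * indicator S y"])
    show "integrable \<nu> (\<lambda>y. B * indicator S y)"
      using S by (intro integrable_mult_right integrable_real_indicator) (auto simp: sets_\<nu>)
    show "AE y in \<nu>. ((\<lambda>x. indicator S y * (h (x - y) / window c x)) \<longlongrightarrow> indicator S y * L) at_top"
      by (intro AE_I2 tendsto_mult_left tendsto_shift_div_window lim)
    show "\<forall>\<^sub>F x in at_top. AE y in \<nu>. norm (indicator S y * (h (x - y) / window c x)) \<le> B * indicator S y"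
      using B window_eventually_pos
    proof eventually_elim
      case (elim x)
      from support show ?case
      proof eventually_elim
        case (elim y)
        show ?case
        proof (cases "y \<in> S")
          case True
          then have "\<bar>h (x - y)\<bar> \<le> B * window c x" using elim \<open>\<forall>y\<in>{0..b}. _\<close> by auto
          then show ?thesis using True \<open>0 < window c x\<close> by (simp add: abs_divide divide_le_eq)
        qed simp
      qed
    qed
    show "(\<lambda>y. indicator S y * L) \<in> borel_measurable \<nu>" using S by measurable
    show "(\<lambda>y. indicator S y * (h (x - y) / window c x)) \<in> borel_measurable \<nu>" for x
      using S by measurable
  qed
  moreover have "(\<integral>y. indicator S y * (h (x - y) / window c x) \<partial>\<nu>) = (\<integral>y. indicator S y * h (x - y) \<partial>\<nu>) / window c x" for x
    by (subst integral_divide_zero[symmetric]) simp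
  moreover have "space \<nu> = UNIV"
    using sets_eq_imp_space_eq[OF sets_\<nu>] by simp
  ultimately show ?thesis by (simp add: mult.commute)
qed

lemma tendsto_conv_mu_head_div_window:
  assumes "0 \<le> a" "h \<in> borel_measurable borel" "((\<lambda>x. h x / window c x) \<longlongrightarrow> L) at_top"
  shows "((\<lambda>x. conv_mu_head h a x / window c x) \<longlongrightarrow> L * measure \<mu> {..a}) at_top"
  unfolding conv_mu_head_def
proof (rule tendsto_integral_div_window[OF sets_eq_borel _ _ _ assms])
  show "AE y in \<mu>. y \<in> {..a} \<longrightarrow> 0 \<le> y \<and> y \<le> a"
    using AE_nonneg by eventually_elim auto
qed (simp_all add: emeasure_eq_measure)

lemma tendsto_local_integral_div_window:
  assumes "h \<in> borel_measurable borel" "((\<lambda>x. h x / window c x) \<longlongrightarrow> L) at_top"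
  shows "((\<lambda>x. local_integral c h x / window c x) \<longlongrightarrow> L * c) at_top"
  using tendsto_integral_div_window[of lborel "{0..<c}" c, OF _ _ _ _ _ assms] c_pos
  by (simp add: local_integral_def emeasure_lborel_Ico_less_top)

lemma tendsto_window_div_window: "((\<lambda>x. window c x / window c x) \<longlongrightarrow> 1) at_top"
proof (rule Lim_transform_eventually[OF tendsto_const])
  show "\<forall>\<^sub>F x in at_top. 1 = window c x / window c x"
    using window_eventually_pos by eventually_elim simp
qed

lemma tendsto_conv_mu_tri_div_window: "((\<lambda>x. conv_mu (tri c) x / window c x) \<longlongrightarrow> c) at_top"
  using tendsto_local_integral_div_window[OF window_measurable tendsto_window_div_window]
  by (simp add: conv_mu_tri[OF c_pos])

lemma eventually_less_conv_window_ratio: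
  assumes "l < 2"
  shows "\<forall>\<^sub>F x in at_top. l < conv_mu (window c) x / window c x"
proof -
  define e where "e = 2 - l"
  have "0 < e" using assms by (simp add: e_def)
  then obtain a where a: "0 \<le> a" "1 - e / 4 < measure \<mu> {..a}"
    using measure_atMost_close_to_1[of "e / 4"] by auto
  have "\<forall>\<^sub>F x in at_top. measure \<mu> {..a} - e / 4 < conv_mu_head (window c) a x / window c x"
    using tendsto_conv_mu_head_div_window[OF a(1) window_measurable tendsto_window_div_window]
    by (rule order_tendstoD) (use \<open>0 < e\<close> in simp)
  moreover have "\<forall>\<^sub>F x in at_top. c + 2 * a \<le> x" by (rule eventually_ge_at_top)
  ultimately show ?thesis
    using window_eventually_pos
  proof eventually_elim
    case (elim x)
    have "2 * conv_mu_head (window c) a x \<le> conv_mu (window c) x"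
      using conv_window_split[OF a(1) elim(2)] conv_mu2_tail_nonneg[OF bounded_kernel_indicator] by simp
    then have "2 * (conv_mu_head (window c) a x / window c x) \<le> conv_mu (window c) x / window c x"
      using elim(3) by (simp add: divide_right_mono)
    then show ?case using elim(1) a(2) e_def by linarith
  qed
qed

lemma eventually_tail_indicator_le:
  assumes "0 \<le> \<eta>" and tail: "\<forall>\<^sub>F x in at_top. conv_mu2_tail (tri c) a x \<le> \<eta> * window c x"
  shows "\<forall>\<^sub>F x in at_top. c * conv_mu2_tail (indicator {0..<c}) a x \<le> 3 * \<eta> * window c x"
  using tail eventually_shift_at_top[OF tail, of c] window_shift_le[of c]
proof eventually_elim
  case (elim x)
  have "\<eta> * window c (x + c) \<le> \<eta> * (2 * window c x)"
    using elim(3) assms(1) by (rule mult_left_mono)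
  then show ?case
    using conv_mu2_tail_indicator_le[OF c_pos, of a x] elim(1,2) by simp
qed

lemma eventually_conv_window_ratio_less:
  assumes "2 < u"
    and small_tail: "\<And>\<eta>. 0 < \<eta> \<Longrightarrow> \<exists>a\<ge>0. \<forall>\<^sub>F x in at_top. conv_mu2_tail (tri c) a x \<le> \<eta> * window c x"
  shows "\<forall>\<^sub>F x in at_top. conv_mu (window c) x / window c x < u"
proof -
  define e where "e = u - 2"
  have e: "0 < e" using assms(1) by (simp add: e_def)
  obtain a where a: "0 \<le> a" and tail: "\<forall>\<^sub>F x in at_top. conv_mu2_tail (tri c) a x \<le> (e * c / 8) * window c x"
    using small_tail[of "e * c / 8"] e c_pos by auto
  have "\<forall>\<^sub>F x in at_top. conv_mu_head (window c) a x / window c x < measure \<mu> {..a} + e / 4"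
    using tendsto_conv_mu_head_div_window[OF a window_measurable tendsto_window_div_window]
    by (rule order_tendstoD) (use e in simp)
  moreover have "\<forall>\<^sub>F x in at_top. c + 2 * a \<le> x" by (rule eventually_ge_at_top)
  moreover have "\<forall>\<^sub>F x in at_top. c * conv_mu2_tail (indicator {0..<c}) a x \<le> 3 * (e * c / 8) * window c x"
    using e c_pos by (intro eventually_tail_indicator_le tail) simp
  moreover note window_eventually_pos
  ultimately show ?thesis
  proof eventually_elim
    case (elim x)
    have tail_ind: "conv_mu2_tail (indicator {0..<c}) a x \<le> 3 / 8 * (e * window c x)"
      using elim(3) c_pos by (simp add: field_simps)
    have "conv_mu_head (window c) a x < (measure \<mu> {..a} + e / 4) * window c x"
      using elim(1,4) by (simp add: divide_less_eq)
    also have "\<dots> \<le> (1 + e / 4) * window c x"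
      using elim(4) by (intro mult_right_mono) auto
    finally have head: "conv_mu_head (window c) a x < window c x + 1 / 4 * (e * window c x)"
      by (simp add: algebra_simps)
    have "u * window c x = 2 * window c x + e * window c x" "0 \<le> e * window c x"
      using e elim(4) by (simp_all add: e_def algebra_simps)
    then have "conv_mu (window c) x < u * window c x"
      using conv_window_split[OF a elim(2)] tail_ind head by simp
    then show ?case using elim(4) by (simp add: divide_less_eq)
  qed
qed

lemma tendsto_conv_window_ratio:
  assumes "\<And>\<eta>. 0 < \<eta> \<Longrightarrow> \<exists>a\<ge>0. \<forall>\<^sub>F x in at_top. conv_mu2_tail (tri c) a x \<le> \<eta> * window c x"
  shows "((\<lambda>x. conv_mu (window c) x / window c x) \<longlongrightarrow> 2) at_top"
  using eventually_less_conv_window_ratio eventually_conv_window_ratio_less[OF _ assms]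
  by (rule order_tendstoI)

lemma tendsto_conv_tri_ratio:
  assumes "((\<lambda>x. conv_mu (window c) x / window c x) \<longlongrightarrow> 2) at_top"
  shows "((\<lambda>x. conv_mu (conv_mu (tri c)) x / window c x) \<longlongrightarrow> 2 * c) at_top"
  using tendsto_local_integral_div_window[OF bounded_kernelD(1)[OF bounded_kernel_conv_mu[OF bounded_kernel_window]] assms]
  by (simp add: conv_mu_conv_mu_tri[OF c_pos])

lemma small_tail_of_conv_tri_ratio:
  assumes K: "((\<lambda>x. conv_mu (conv_mu (tri c)) x / window c x) \<longlongrightarrow> 2 * c) at_top" and "0 < \<eta>"
  shows "\<exists>a\<ge>0. \<forall>\<^sub>F x in at_top. conv_mu2_tail (tri c) a x \<le> \<eta> * window c x"
proof -
  obtain a where a: "0 \<le> a" "1 - \<eta> / (4 * c) < measure \<mu> {..a}"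
    using measure_atMost_close_to_1[of "\<eta> / (4 * c)"] \<open>0 < \<eta>\<close> c_pos by auto
  have "((\<lambda>x. conv_mu (conv_mu (tri c)) x / window c x - 2 * (conv_mu_head (conv_mu (tri c)) a x / window c x))
      \<longlongrightarrow> 2 * c - 2 * (c * measure \<mu> {..a})) at_top"
    by (intro tendsto_diff K tendsto_mult tendsto_const tendsto_conv_mu_head_div_window[OF a(1) _ tendsto_conv_mu_tri_div_window]
        bounded_kernelD(1)[OF bounded_kernel_conv_mu[OF bounded_kernel_tri]]) (use c_pos in simp)
  moreover have "2 * c - 2 * (c * measure \<mu> {..a}) < \<eta>"
    using a(2) c_pos \<open>0 < \<eta>\<close> by (simp add: field_simps)
  ultimately have "\<forall>\<^sub>F x in at_top.
      conv_mu (conv_mu (tri c)) x / window c x - 2 * (conv_mu_head (conv_mu (tri c)) a x / window c x) < \<eta>"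
    by (rule order_tendstoD)
  moreover have "\<forall>\<^sub>F x in at_top. 2 * c + 2 * a \<le> x" by (rule eventually_ge_at_top)
  ultimately have "\<forall>\<^sub>F x in at_top. conv_mu2_tail (tri c) a x \<le> \<eta> * window c x"
    using window_eventually_pos
  proof eventually_elim
    case (elim x)
    have "conv_mu2_tail (tri c) a x / window c x < \<eta>"
      using elim(1) conv_mu2_tri_split[OF a(1) less_imp_le[OF c_pos] elim(2)]
      by (simp add: add_divide_distrib)
    then show ?case using elim(3) by (simp add: divide_less_eq)
  qed
  then show ?thesis using a(1) by blast
qed

lemma small_tail_of_asymp_equiv_density:
  assumes q: "subexponential_density q" and pq: "asymp_equiv_top (\<lambda>x. window c x / c) q" and \<eta>: "0 < \<eta>"
  shows "\<exists>a\<ge>0. \<forall>\<^sub>F x in at_top. conv_mu2_tail (tri c) a x \<le> \<eta> * window c x"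
proof -
  interpret q: subexponential_density q by (rule q)
  have ratio: "((\<lambda>x. window c x / c / q x) \<longlongrightarrow> 1) at_top"
    using pq unfolding asymp_equiv_top_def .
  have "\<forall>\<^sub>F x in at_top. window c x / c / q x < 2"
    using ratio by (rule order_tendstoD) simp
  then have "\<forall>\<^sub>F x in at_top. window c x \<le> 2 * c * q x"
    using q.eventually_pos by eventually_elim (use c_pos in \<open>auto simp: field_simps\<close>)
  then obtain N where N: "\<And>z. N \<le> z \<Longrightarrow> window c z \<le> 2 * c * q z"
    by (auto simp: eventually_at_top_linorder)
  have "\<forall>\<^sub>F x in at_top. 1 / 2 < window c x / c / q x"
    using ratio by (rule order_tendstoD) simp
  then have q_le: "\<forall>\<^sub>F x in at_top. c * q x \<le> 2 * window c x"
    using q.eventually_pos by eventually_elim (use c_pos in \<open>auto simp: field_simps\<close>)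
  obtain A where A: "\<And>a. A \<le> a \<Longrightarrow> \<forall>\<^sub>F x in at_top. q.conv_middle a x \<le> ennreal (\<eta> / (8 * c) * q x)"
    using q.conv_middle_small[of "\<eta> / (8 * c)"] \<eta> c_pos by auto
  define a where "a = max A (max N 0)"
  have "A \<le> a" by (simp add: a_def)
  have "\<forall>\<^sub>F x in at_top. conv_mu2_tail (tri c) a x \<le> \<eta> * window c x"
    using A[OF \<open>A \<le> a\<close>] q_le
  proof eventually_elim
    case (elim x)
    have "ennreal (conv_mu2_tail (tri c) a x) \<le> ennreal (4 * c\<^sup>2) * q.conv_middle a x"
      by (rule conv_mu2_tail_tri_le_conv_middle[OF c_pos q]) (use N in \<open>auto simp: a_def\<close>)
    also have "\<dots> \<le> ennreal (4 * c\<^sup>2) * ennreal (\<eta> / (8 * c) * q x)"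
      by (intro mult_left_mono elim(1)) auto
    also have "\<dots> = ennreal (4 * c\<^sup>2 * (\<eta> / (8 * c) * q x))"
      using c_pos \<eta> by (intro ennreal_mult[symmetric]) (auto simp: q.nonneg)
    also have "4 * c\<^sup>2 * (\<eta> / (8 * c) * q x) = \<eta> / 2 * (c * q x)"
      using c_pos by (simp add: power2_eq_square field_simps)
    also have "\<dots> \<le> ennreal (\<eta> / 2 * (2 * window c x))"
      using elim(2) \<eta> by (intro ennreal_leI mult_left_mono) auto
    finally show ?case
      using \<eta> window_nonneg[of c x] by (subst (asm) ennreal_le_iff) auto
  qed
  then show ?thesis by (intro exI[of _ a]) (simp add: a_def)
qed

lemma S_Delta_iff_conv_window_ratio:
  "S_Delta c \<mu> \<longleftrightarrow> ((\<lambda>x. conv_mu (window c) x / window c x) \<longlongrightarrow> 2) at_top"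
proof -
  have "L_Delta c \<mu>"
    using class_L_window by (simp add: L_Delta_iff_class_L_window)
  moreover have "asymp_equiv_top (\<lambda>x. measure (\<mu> \<star> \<mu>) {x<..x + c}) (\<lambda>x. 2 * measure \<mu> {x<..x + c})
      \<longleftrightarrow> asymp_equiv_top (conv_mu (window c)) (\<lambda>x. 2 * window c x)"
    using asymp_equiv_top_shift_iff[of "conv_mu (window c)" c "\<lambda>x. 2 * window c x"]
    by (simp add: measure_conv_window[symmetric] window_def)
  ultimately show ?thesis
    by (simp add: S_Delta_def asymp_equiv_top_iff_tendsto_ratio)
qed

lemma S_d_window_iff_conv_tri_ratio:
  "S_d (\<lambda>x. window c x / c) \<longleftrightarrow> ((\<lambda>x. conv_mu (conv_mu (tri c)) x / window c x) \<longlongrightarrow> 2 * c) at_top"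
proof -
  let ?p = "\<lambda>x. window c x / c"
  have "fconv ?p ?p x = fconv (window c) (window c) x / c\<^sup>2" for x
    unfolding fconv_def by (subst integral_divide_zero[symmetric]) (simp add: power2_eq_square)
  then have ratio: "(\<lambda>x. fconv ?p ?p x / ?p x) = (\<lambda>x. conv_mu (conv_mu (tri c)) x / window c x / c)"
    using c_pos by (simp add: fconv_window power2_eq_square fun_eq_iff)
  have "asymp_equiv_top (fconv ?p ?p) (\<lambda>x. 2 * ?p x)
      \<longleftrightarrow> ((\<lambda>x. conv_mu (conv_mu (tri c)) x / window c x / c) \<longlongrightarrow> 2) at_top"
    by (simp only: asymp_equiv_top_iff_tendsto_ratio ratio)
  also have "\<dots> \<longleftrightarrow> ((\<lambda>x. conv_mu (conv_mu (tri c)) x / window c x) \<longlongrightarrow> 2 * c) at_top"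
    by (rule tendsto_divide_const_iff) (use c_pos in simp)
  finally show ?thesis
    using c_pos class_L_window density_fun_window[OF c_pos]
    by (simp add: S_d_def L_d_def class_L_divide_iff)
qed

lemma S_Delta_iff_S_d_window: "S_Delta c \<mu> \<longleftrightarrow> S_d (\<lambda>x. window c x / c)"
  unfolding S_Delta_iff_conv_window_ratio S_d_window_iff_conv_tri_ratio
  using tendsto_conv_tri_ratio tendsto_conv_window_ratio small_tail_of_conv_tri_ratio by blast

end

section \<open>Local subexponentiality\<close>

context nonneg_distribution
begin

lemma S_Delta_iff_S_d:
  assumes "0 < c"
  shows "S_Delta c \<mu> \<longleftrightarrow> S_d (\<lambda>x. measure \<mu> {x - c<..x} / c)"
proof (cases "class_L (window c)")
  case True
  interpret long_tailed_window \<mu> c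
    by unfold_locales (use assms True in auto)
  show ?thesis using S_Delta_iff_S_d_window by (simp add: window_def)
next
  case False
  then show ?thesis
    using assms by (simp add: S_Delta_def S_d_def L_d_def L_Delta_iff_class_L_window
        class_L_divide_iff window_def[symmetric])
qed

lemma tendsto_window_fraction_ratio:
  assumes L: "\<And>r. 0 < r \<Longrightarrow> class_L (window r)" and "0 < m" "0 < n"
  shows "((\<lambda>x. window (real m / real n) x / window 1 x) \<longlongrightarrow> real m / real n) at_top"
proof -
  define h where "h = 1 / real n"
  have h: "0 < h" using \<open>0 < n\<close> by (simp add: h_def)
  interpret long_tailed_window \<mu> h
    by unfold_locales (use h L in auto)
  have multiple: "((\<lambda>x. window (real j * h) x / window h x) \<longlongrightarrow> real j) at_top" for j
  proof -
    have "((\<lambda>x. \<Sum>k<j. window h (x + - (real k * h)) / window h x) \<longlongrightarrow> (\<Sum>k<j. 1)) at_top"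
      by (intro tendsto_sum window_shift_ratio)
    then show ?thesis by (simp add: window_mult[OF h] sum_divide_distrib)
  qed
  have "((\<lambda>x. (window (real m * h) x / window h x) / (window (real n * h) x / window h x))
      \<longlongrightarrow> real m / real n) at_top"
    by (intro tendsto_divide multiple) (use \<open>0 < n\<close> in auto)
  moreover have "\<forall>\<^sub>F x in at_top. (window (real m * h) x / window h x) / (window (real n * h) x / window h x)
      = window (real m / real n) x / window 1 x"
    using window_eventually_pos by eventually_elim (use \<open>0 < n\<close> in \<open>simp add: h_def\<close>)
  ultimately show ?thesis by (rule Lim_transform_eventually)
qed

lemma tendsto_window_ratio:
  assumes L: "\<And>r. 0 < r \<Longrightarrow> class_L (window r)" and "0 < r"
  shows "((\<lambda>x. window r x / window 1 x) \<longlongrightarrow> r) at_top"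
proof -
  have window_1_pos: "\<forall>\<^sub>F x in at_top. 0 < window 1 x"
    using class_LD(3)[OF L[of 1]] by simp
  have fraction_lim: "((\<lambda>x. window (real m / real n) x / window 1 x) \<longlongrightarrow> real m / real n) at_top"
    if "0 < m" "0 < n" for m n
    using tendsto_window_fraction_ratio[OF L that] .
  show ?thesis
  proof (rule order_tendstoI)
    fix l assume "l < r"
    then obtain m n :: nat where mn: "0 < m" "0 < n" "max l 0 < real m / real n" "real m / real n < r"
      using positive_fraction_between[of "max l 0" r] \<open>0 < r\<close> by auto
    have "\<forall>\<^sub>F x in at_top. l < window (real m / real n) x / window 1 x"
      using fraction_lim[OF mn(1,2)] by (rule order_tendstoD) (use mn in auto)
    then show "\<forall>\<^sub>F x in at_top. l < window r x / window 1 x"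
      using window_1_pos
    proof eventually_elim
      case (elim x)
      have "window (real m / real n) x \<le> window r x" by (rule window_mono) (use mn in auto)
      then show ?case using elim by (smt (verit) divide_right_mono)
    qed
  next
    fix u assume "r < u"
    then obtain m n :: nat where mn: "0 < m" "0 < n" "r < real m / real n" "real m / real n < u"
      using positive_fraction_between[of r u] \<open>0 < r\<close> by auto
    have "\<forall>\<^sub>F x in at_top. window (real m / real n) x / window 1 x < u"
      using fraction_lim[OF mn(1,2)] by (rule order_tendstoD) (use mn in auto)
    then show "\<forall>\<^sub>F x in at_top. window r x / window 1 x < u"
      using window_1_pos
    proof eventually_elim
      case (elim x)
      have "window r x \<le> window (real m / real n) x" by (rule window_mono) (use mn in auto)
      then show ?case using elim by (smt (verit) divide_right_mono)
    qed
  qed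
qed

lemma S_loc_imp_asymp_equiv_density:
  assumes "S_loc \<mu>"
  shows "\<exists>q. density_fun q \<and> (\<forall>x<0. q x = 0) \<and> S_d q \<and>
    (\<forall>c'>0. asymp_equiv_top (\<lambda>x. measure \<mu> {x - c'<..x} / c') q)"
proof (intro exI conjI allI impI)
  have S: "S_Delta r \<mu>" if "0 < r" for r
    using assms that by (simp add: S_loc_def)
  then have L: "class_L (window r)" if "0 < r" for r
    using that by (simp add: S_Delta_def L_Delta_iff_class_L_window)
  show "density_fun (\<lambda>x. measure \<mu> {x - 1<..x} / 1)"
    using density_fun_window[of 1] by (simp add: window_def)
  show "measure \<mu> {x - 1<..x} / 1 = 0" if "x < 0" for x :: real
  proof -
    have "measure \<mu> {x - 1<..x} \<le> measure \<mu> {..<0}"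
      using that by (intro finite_measure_mono) (auto simp: sets_eq_borel)
    then show ?thesis using measure_negative by (simp add: measure_le_0_iff)
  qed
  show "S_d (\<lambda>x. measure \<mu> {x - 1<..x} / 1)"
    using S_Delta_iff_S_d[of 1] S[of 1] by simp
  show "asymp_equiv_top (\<lambda>x. measure \<mu> {x - c'<..x} / c') (\<lambda>x. measure \<mu> {x - 1<..x} / 1)" if "0 < c'" for c'
    using tendsto_window_ratio[OF L that] tendsto_divide_const_iff[of c' "\<lambda>x. window c' x / window 1 x" 1 at_top] that
    by (simp add: asymp_equiv_top_def window_def field_simps)
qed

lemma S_Delta_of_asymp_equiv_density:
  assumes c: "0 < c" and q: "subexponential_density q"
    and pq: "asymp_equiv_top (\<lambda>x. window c x / c) q"
  shows "S_Delta c \<mu>"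
proof -
  have "class_L (\<lambda>x. window c x / c)"
    using c class_L_asymp_equiv[OF subexponential_density.class_L[OF q] _ _ pq]
    by (simp add: window_nonneg)
  then interpret long_tailed_window \<mu> c
    by unfold_locales (use c in \<open>auto simp: class_L_divide_iff\<close>)
  show ?thesis
    using small_tail_of_asymp_equiv_density[OF q pq]
    by (simp add: S_Delta_iff_conv_window_ratio tendsto_conv_window_ratio)
qed

text \<open>The converse direction does not use that \<open>q\<close> vanishes on \<open>(-\<infinity>, 0)\<close>.\<close>

lemma S_loc_iff_asymp_equiv_density:
  "S_loc \<mu> \<longleftrightarrow> (\<exists>q. density_fun q \<and> (\<forall>x<0. q x = 0) \<and> S_d q \<and>
    (\<forall>c'>0. asymp_equiv_top (\<lambda>x. measure \<mu> {x - c'<..x} / c') q))"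
proof
  assume "\<exists>q. density_fun q \<and> (\<forall>x<0. q x = 0) \<and> S_d q \<and>
    (\<forall>c'>0. asymp_equiv_top (\<lambda>x. measure \<mu> {x - c'<..x} / c') q)"
  then obtain q where "subexponential_density q" "\<And>c'. 0 < c' \<Longrightarrow> asymp_equiv_top (\<lambda>x. window c' x / c') q"
    by (auto simp: subexponential_density_def window_def)
  then show "S_loc \<mu>"
    by (auto simp: S_loc_def intro: S_Delta_of_asymp_equiv_density)
qed (rule S_loc_imp_asymp_equiv_density)

end

theorem proposition1p1:
  fixes \<mu> :: "real measure" and c :: real
  assumes "real_distribution' \<mu>"
    and "measure \<mu> {..<0} = 0"
    and "c > 0"
  shows "(S_Delta c \<mu> \<longleftrightarrow> S_d (\<lambda>x. measure \<mu> {x - c<..x} / c))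
    \<and> (S_loc \<mu> \<longleftrightarrow>
        (\<exists>q. density_fun q \<and> (\<forall>x<0. q x = 0) \<and> S_d q \<and>
             (\<forall>c'>0. asymp_equiv_top (\<lambda>x. measure \<mu> {x - c'<..x} / c') q)))"
proof -
  interpret nonneg_distribution \<mu>
    using assms(1,2)
    unfolding real_distribution'_def nonneg_distribution_def nonneg_distribution_axioms_def by auto
  show ?thesis
    using S_Delta_iff_S_d[OF assms(3)] S_loc_iff_asymp_equiv_density by blast
qed

end
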